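(* Let $(x,y,z,v)(t)$, $t\in\mathbb R$, be a normal extremal ($M=1$) starting at the identity with $\varphi_3=\varphi_4=0$. Then $\theta(t)\equiv\theta_0$ for some constant $\theta_0$. The extremals with these data are a single one-parameter subgroup $x(t)=u_1(\theta_0)t$, $y(t)=u_2(\theta_0)t$, $z\equiv v\equiv0$ (with $u_1(\theta_0)=\frac{r'(\theta_0)\sin\theta_0+r(\theta_0)\cos\theta_0}{r^2(\theta_0)}$, $u_2(\theta_0)=\frac{r(\theta_0)\sin\theta_0-r'(\theta_0)\cos\theta_0}{r^2(\theta_0)}$) if and only if the usual derivative $r'(\theta_0)$ exists. In all cases every such extremal is a metric straight line in $(G,d)$.
   Context: Let $\mathfrak g$ be the Engel algebra with basis $X,Y,Z,V$, $[X,Y]=Z$, $[X,Z]=V$, all other brackets of basis elements zero; $G$ the corresponding connected simply connected Lie group, with coordinates of the first kind $(x,y,z,v)$ (identity $=0$). Let $F$ be an arbitrary norm on $\mathbb R^2$, $U=\{u:F(u)\le1\}$, where $(u_1,u_2)$ is identified with $u_1X(e)+u_2Y(e)$; $d$ is the left-invariant sub-Finsler metric on $G$ defined by the distribution spanned by $X,Y$ and the norm $F$ (length of an admissible curve with control $u$ is $\int F(u(t))dt$). The control system is $\dot x=u_1,\ \dot y=u_2,\ \dot z=\tfrac12(xu_2-yu_1),\ \dot v=-\tfrac12(z+\tfrac16xy)u_1+\tfrac1{12}x^2u_2$, measurable $u(t)\in U$, $x(0)=y(0)=z(0)=v(0)=0$. An extremal is a trajectory with control $u(t)$ for which there is a nowhere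 vanishing absolutely continuous $\psi=(\psi_1,\dots,\psi_4)$ with a.e. $\dot\psi_1=\tfrac1{12}\psi_4yu_1-(\tfrac12\psi_3+\tfrac16\psi_4x)u_2$, $\dot\psi_2=(\tfrac12\psi_3+\tfrac1{12}\psi_4x)u_1$, $\dot\psi_3=\tfrac12\psi_4u_1$, $\dot\psi_4=0$ and $h_1u_1(t)+h_2u_2(t)=\max_{u\in U}(h_1u_1+h_2u_2)=M$ a.e., with $h_1=\psi_1-\tfrac12\psi_3y-\tfrac1{12}\psi_4xy-\tfrac12\psi_4z$, $h_2=\psi_2+\tfrac12\psi_3x+\tfrac1{12}\psi_4x^2$, $M\ge0$ constant; normal means $M>0$, normalized to $M=1$. $\varphi_i=\psi_i(0)$. $F_U(h)=\max_{u\in U}h\cdot u$, $U^*=\{h:F_U(h)\le1\}$; $r(\theta)>0$ with $F_U(r(\theta)\cos\theta,r(\theta)\sin\theta)=1$ is the polar equation of $\partial U^*$; $r'(\theta)$ denotes any number between the one-sided derivatives of $r$ at $\theta$. For $M=1$, $\theta(t)$ is a continuous function with $(h_1(t),h_2(t))=r(\theta(t))(\cos\theta(t),\sin\theta(t))$. A metric straight line is a curve $\gamma:\mathbb R\to G$ with $d(\gamma(s),\gamma(t))=|s-t|$ for all $s,t$. *)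

theory Defs
  imports "HOL-Analysis.Analysis"
begin

type_synonym pt4 = "real \<times> real \<times> real \<times> real"

text \<open>F is a norm on R^2 (identified with span of X(e), Y(e)).\<close>
definition is_norm :: "(real \<times> real \<Rightarrow> real) \<Rightarrow> bool" where
  "is_norm F \<longleftrightarrow> (\<forall>u. 0 \<le> F u) \<and> (\<forall>u. F u = 0 \<longleftrightarrow> u = 0) \<and>
     (\<forall>c u. F (c *\<^sub>R u) = \<bar>c\<bar> * F u) \<and> (\<forall>u w. F (u + w) \<le> F u + F w)"

definition FU :: "(real \<times> real \<Rightarrow> real) \<Rightarrow> real \<times> real \<Rightarrow> real" where
  "FU F h = Sup ((\<lambda>u. fst h * fst u + snd h * snd u) ` {u. F u \<le> 1})"

text \<open>polar equation r(theta) of the boundary of U^*\<close>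
definition rpol :: "(real \<times> real \<Rightarrow> real) \<Rightarrow> real \<Rightarrow> real" where
  "rpol F \<theta> = (THE \<rho>. 0 < \<rho> \<and> FU F (\<rho> * cos \<theta>, \<rho> * sin \<theta>) = 1)"

definition abs_cont_on :: "real set \<Rightarrow> (real \<Rightarrow> 'a::real_normed_vector) \<Rightarrow> bool" where
  "abs_cont_on S f \<longleftrightarrow> (\<forall>e>0. \<exists>d>0. \<forall>(n::nat) (a::nat \<Rightarrow> real) b.
     (\<forall>i<n. a i \<le> b i \<and> {a i..b i} \<subseteq> S) \<and> disjoint_family_on (\<lambda>i. {a i<..<b i}) {..<n} \<and>
     (\<Sum>i<n. b i - a i) < d \<longrightarrow> (\<Sum>i<n. norm (f (b i) - f (a i))) < e)"

text \<open>right-hand side of the control system (u1 X + u2 Y in coordinates of the first kind)\<close>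
definition ctrl_field :: "pt4 \<Rightarrow> real \<times> real \<Rightarrow> pt4" where
  "ctrl_field = (\<lambda>(x,y,z,v) (u1,u2).
     (u1, u2, (x*u2 - y*u1)/2, -(z + x*y/6)*u1/2 + x^2*u2/12))"

definition adj_field :: "pt4 \<Rightarrow> real \<times> real \<Rightarrow> pt4 \<Rightarrow> pt4" where
  "adj_field = (\<lambda>(x,y,z,v) (u1,u2) (p1,p2,p3,p4).
     (p4*y*u1/12 - (p3/2 + p4*x/6)*u2, (p3/2 + p4*x/12)*u1, p4*u1/2, 0))"

definition hvec :: "pt4 \<Rightarrow> pt4 \<Rightarrow> real \<times> real" where
  "hvec = (\<lambda>(x,y,z,v) (p1,p2,p3,p4).
     (p1 - p3*y/2 - p4*x*y/12 - p4*z/2, p2 + p3*x/2 + p4*x^2/12))"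

text \<open>admissible curve on [0,T] with control u (u need not lie in U)\<close>
definition admissible :: "real \<Rightarrow> (real \<Rightarrow> pt4) \<Rightarrow> (real \<Rightarrow> real \<times> real) \<Rightarrow> bool" where
  "admissible T g u \<longleftrightarrow> 0 \<le> T \<and> u \<in> borel_measurable lborel \<and> abs_cont_on {0..T} g \<and>
     (AE t in lborel. t \<in> {0..T} \<longrightarrow>
        (g has_vector_derivative ctrl_field (g t) (u t)) (at t within {0..T}))"

definition sF_dist :: "(real \<times> real \<Rightarrow> real) \<Rightarrow> pt4 \<Rightarrow> pt4 \<Rightarrow> real" where
  "sF_dist F p q = Inf {integral {0..T} (\<lambda>t. F (u t)) | T g u.
      admissible T g u \<and> (\<lambda>t. F (u t)) absolutely_integrable_on {0..T} \<and> g 0 = p \<and> g T = q}"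

definition normal_ext :: "(real \<times> real \<Rightarrow> real) \<Rightarrow> (real \<Rightarrow> pt4) \<Rightarrow> (real \<Rightarrow> real \<times> real)
     \<Rightarrow> (real \<Rightarrow> pt4) \<Rightarrow> bool" where
  "normal_ext F g u \<psi> \<longleftrightarrow>
     g 0 = (0,0,0,0) \<and> u \<in> borel_measurable lborel \<and> (\<forall>t. F (u t) \<le> 1) \<and>
     (\<forall>a b. abs_cont_on {a..b} g) \<and>
     (AE t in lborel. (g has_vector_derivative ctrl_field (g t) (u t)) (at t)) \<and>
     (\<forall>a b. abs_cont_on {a..b} \<psi>) \<and> (\<forall>t. \<psi> t \<noteq> 0) \<and>
     (AE t in lborel. (\<psi> has_vector_derivative adj_field (g t) (u t) (\<psi> t)) (at t)) \<and>
     (AE t in lborel. fst (hvec (g t) (\<psi> t)) * fst (u t) + snd (hvec (g t) (\<psi> t)) * snd (u t)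
                        = FU F (hvec (g t) (\<psi> t)) \<and> FU F (hvec (g t) (\<psi> t)) = 1)"

text \<open>the trajectories of normal extremals with phi3 = phi4 = 0 and theta(0) = theta0\<close>
definition ext_data :: "(real \<times> real \<Rightarrow> real) \<Rightarrow> real \<Rightarrow> (real \<Rightarrow> pt4) set" where
  "ext_data F \<theta>0 = {g. \<exists>u \<psi>. normal_ext F g u \<psi> \<and>
      \<psi> 0 = (rpol F \<theta>0 * cos \<theta>0, rpol F \<theta>0 * sin \<theta>0, 0, 0)}"

end

theory Submission
  imports Defs
begin

(* With \<phi>3 = \<phi>4 = 0 the adjoint system forces \<psi> to be constant, so h = (\<phi>1, \<phi>2) is constant
   with F_U(h) = 1 and the control lies a.e. in the face {u \<in> U. <h, u> = 1} of U exposed by h.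
   Hence \<theta> is constant, and the extremals are exactly the horizontal lines t \<mapsto> (t u1, t u2, 0, 0)
   with u in that face. The face is a single point iff r is differentiable at \<theta>0: if it is,
   differentiating <r(\<theta>) e(\<theta>), u> \<le> 1 at its maximum \<theta>0 pins u down; conversely a unique
   maximiser of <e(\<theta>), .> over U depends continuously on \<theta>, which makes F_U(e(\<theta>)) = 1/r(\<theta>)
   differentiable at \<theta>0. Finally the linear function h1 x + h2 y changes at most at unit speed
   along any admissible curve, since |<h, u>| \<le> F(u), and exactly at unit speed along the
   extremal, so the extremal is a metric line. For the lower bound on lengths one needs the
   fundamental theorem of calculus, as an inequality, for absolutely continuous functions; it is
   derived from Lusin's property (N). *)

section \<open>Norms on the plane and their duals\<close>

lemma is_norm_nonneg: "is_norm F \<Longrightarrow> 0 \<le> F u"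
  unfolding is_norm_def by blast

lemma is_norm_eq_0_iff: "is_norm F \<Longrightarrow> F u = 0 \<longleftrightarrow> u = 0"
  unfolding is_norm_def by blast

lemma is_norm_scaleR: "is_norm F \<Longrightarrow> F (c *\<^sub>R u) = \<bar>c\<bar> * F u"
  unfolding is_norm_def by blast

lemma is_norm_triangle: "is_norm F \<Longrightarrow> F (u + w) \<le> F u + F w"
  unfolding is_norm_def by blast

lemma is_norm_zero: "is_norm F \<Longrightarrow> F 0 = 0"
  using is_norm_eq_0_iff by blast

lemma is_norm_pos: "is_norm F \<Longrightarrow> u \<noteq> 0 \<Longrightarrow> 0 < F u"
  using is_norm_nonneg is_norm_eq_0_iff by (metis order_less_le)

lemma is_norm_minus: "is_norm F \<Longrightarrow> F (- u) = F u"
  using is_norm_scaleR[of F "-1" u] by simp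

lemma is_norm_le: assumes n: "is_norm F" shows "F u \<le> (F (1,0) + F (0,1)) * norm u"
proof -
  obtain a b where u: "u = (a,b)" by fastforce
  have "F u \<le> F (a *\<^sub>R (1,0)) + F (b *\<^sub>R (0,1))"
    using is_norm_triangle[OF n, of "a *\<^sub>R (1,0)" "b *\<^sub>R (0,1)"] u by simp
  also have "\<dots> = \<bar>a\<bar> * F (1,0) + \<bar>b\<bar> * F (0,1)"
    by (simp only: is_norm_scaleR[OF n])
  also have "\<dots> \<le> norm u * F (1,0) + norm u * F (0,1)"
    using u is_norm_nonneg[OF n]
    by (intro add_mono mult_right_mono) (auto simp: norm_Pair intro: real_sqrt_ge_abs1 real_sqrt_ge_abs2)
  finally show ?thesis by (simp add: algebra_simps)
qed

lemma is_norm_lipschitz: assumes n: "is_norm F" shows "(F (1,0) + F (0,1))-lipschitz_on UNIV F"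
proof (rule lipschitz_onI)
  fix u w :: "real \<times> real"
  have "F u \<le> F (u - w) + F w" "F w \<le> F (u - w) + F u"
    using is_norm_triangle[OF n, of "u - w" w] is_norm_triangle[OF n, of "-(u - w)" u]
      is_norm_minus[OF n, of "u - w"] by simp_all
  then have "dist (F u) (F w) \<le> F (u - w)" by (simp add: dist_real_def)
  also have "\<dots> \<le> (F (1,0) + F (0,1)) * dist u w" using is_norm_le[OF n] by (simp add: dist_norm)
  finally show "dist (F u) (F w) \<le> (F (1,0) + F (0,1)) * dist u w" .
qed (use is_norm_nonneg[OF n] in auto)

lemma continuous_on_is_norm: "is_norm F \<Longrightarrow> continuous_on S F"
  using lipschitz_on_continuous_on[OF is_norm_lipschitz] continuous_on_subset by blast

lemma is_norm_ge: assumes n: "is_norm F" obtains m where "m > 0" "\<And>u. m * norm u \<le> F u"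
proof -
  have "(1, 0) \<in> sphere (0::real \<times> real) 1" by simp
  then have "sphere (0::real \<times> real) 1 \<noteq> {}" by blast
  then obtain u0 where u0: "u0 \<in> sphere 0 1" and min: "\<And>y. y \<in> sphere 0 1 \<Longrightarrow> F u0 \<le> F y"
    using continuous_attains_inf[OF compact_sphere _ continuous_on_is_norm[OF n]] by blast
  have "F u0 * norm u \<le> F u" for u
  proof (cases "u = 0")
    case False
    then have "F u0 \<le> F ((1 / norm u) *\<^sub>R u)" by (intro min) simp
    then show ?thesis using False by (simp add: is_norm_scaleR[OF n] field_simps)
  qed (simp add: is_norm_zero[OF n])
  moreover have "u0 \<noteq> 0" using u0 by auto
  ultimately show ?thesis using that is_norm_pos[OF n] by blast
qed

lemma bounded_unit_ball: assumes n: "is_norm F" obtains R where "R > 0" "\<And>u. F u \<le> 1 \<Longrightarrow> norm u \<le> R"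
proof -
  obtain m where m: "m > 0" "\<And>u. m * norm u \<le> F u" by (rule is_norm_ge[OF n]) blast
  have "norm u \<le> 1 / m" if "F u \<le> 1" for u
    using m(2)[of u] that m(1) by (simp add: field_simps)
  then show ?thesis using that[of "1/m"] m(1) by simp
qed

lemma compact_unit_ball: assumes n: "is_norm F" shows "compact {u. F u \<le> 1}"
proof -
  obtain R where "R > 0" "\<And>u. F u \<le> 1 \<Longrightarrow> norm u \<le> R" by (rule bounded_unit_ball[OF n]) blast
  then have "bounded {u. F u \<le> 1}" unfolding bounded_iff by blast
  moreover have "closed {u. F u \<le> (1::real)}"
    using continuous_on_is_norm[OF n] by (intro closed_Collect_le) auto
  ultimately show ?thesis by (simp add: compact_eq_bounded_closed)
qed

lemma inner_prod_real: "inner h u = fst h * fst u + snd h * snd (u :: real \<times> real)"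
  by (cases h, cases u) simp

lemma FU_attained: assumes n: "is_norm F"
  obtains u where "F u \<le> 1" "inner h u = FU F h" "\<And>w. F w \<le> 1 \<Longrightarrow> inner h w \<le> inner h u"
proof -
  have "(0::real\<times>real) \<in> {u. F u \<le> 1}" using is_norm_zero[OF n] by simp
  moreover have "continuous_on {u. F u \<le> 1} (inner h)" by (intro continuous_intros)
  ultimately obtain u where u: "F u \<le> 1" "\<And>w. F w \<le> 1 \<Longrightarrow> inner h w \<le> inner h u"
    using continuous_attains_sup[OF compact_unit_ball[OF n], of "inner h"] by fastforce
  have "FU F h = Sup (inner h ` {u. F u \<le> 1})"
    unfolding FU_def inner_prod_real ..
  also have "\<dots> = inner h u" using u by (intro cSup_eq_maximum) auto
  finally show ?thesis using that u by simp
qed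

lemma inner_le_FU: "is_norm F \<Longrightarrow> F w \<le> 1 \<Longrightarrow> inner h w \<le> FU F h"
  by (metis FU_attained)

lemma inner_le_FU_mult: assumes n: "is_norm F" shows "inner h w \<le> FU F h * F w"
proof (cases "w = 0")
  case False
  then have Fw: "F w > 0" by (rule is_norm_pos[OF n])
  then have "inner h ((1 / F w) *\<^sub>R w) \<le> FU F h"
    by (intro inner_le_FU[OF n]) (simp add: is_norm_scaleR[OF n])
  then show ?thesis using Fw by (simp add: pos_divide_le_eq)
qed (simp add: is_norm_zero[OF n])

lemma abs_inner_le_FU_mult: "is_norm F \<Longrightarrow> \<bar>inner h w\<bar> \<le> FU F h * F w"
  using inner_le_FU_mult[of F h w] inner_le_FU_mult[of F h "- w"] is_norm_minus[of F w] by auto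

lemma FU_pos: assumes n: "is_norm F" and h: "h \<noteq> 0" shows "FU F h > 0"
proof -
  have "0 < inner h h" using h by simp
  also have "\<dots> \<le> FU F h * F h" by (rule inner_le_FU_mult[OF n])
  finally show ?thesis using is_norm_pos[OF n h] by (simp add: zero_less_mult_iff)
qed

lemma FU_scaleR: assumes n: "is_norm F" and r: "0 \<le> r" shows "FU F (r *\<^sub>R h) = r * FU F h"
proof -
  obtain u where u: "F u \<le> 1" "inner h u = FU F h" "\<And>w. F w \<le> 1 \<Longrightarrow> inner h w \<le> inner h u"
    by (rule FU_attained[OF n]) blast
  obtain v where v: "F v \<le> 1" "inner (r *\<^sub>R h) v = FU F (r *\<^sub>R h)"
    using FU_attained[OF n] by blast
  have "r * inner h u \<le> FU F (r *\<^sub>R h)" using inner_le_FU[OF n u(1), of "r *\<^sub>R h"] by simp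
  moreover have "inner (r *\<^sub>R h) v \<le> r * inner h u" using u(3)[OF v(1)] r by (simp add: mult_left_mono)
  ultimately show ?thesis using u(2) v(2) by simp
qed

definition dir :: "real \<Rightarrow> real \<times> real" where "dir \<theta> = (cos \<theta>, sin \<theta>)"

lemma norm_dir [simp]: "norm (dir \<theta>) = 1"
  by (simp add: dir_def norm_Pair)

lemma dir_neq_0 [simp]: "dir \<theta> \<noteq> 0"
  using norm_dir[of \<theta>] by (metis norm_zero zero_neq_one)

lemma inner_dir: "inner (dir \<theta>) u = cos \<theta> * fst u + sin \<theta> * snd u"
  by (simp add: dir_def inner_prod_real)

lemma dist_dir_le: "dist (dir a) (dir b) \<le> 2 * \<bar>a - b\<bar>"
proof -
  have "\<bar>cos a - cos b\<bar> = 2 * \<bar>sin ((a + b) / 2)\<bar> * \<bar>sin ((b - a) / 2)\<bar>"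
    by (simp add: cos_diff_cos abs_mult)
  also have "\<dots> \<le> 2 * 1 * \<bar>(b - a) / 2\<bar>"
    by (intro mult_mono abs_sin_le_one abs_sin_x_le_abs_x) auto
  finally have cos: "\<bar>cos a - cos b\<bar> \<le> \<bar>a - b\<bar>" by simp
  have "\<bar>sin a - sin b\<bar> = 2 * \<bar>sin ((a - b) / 2)\<bar> * \<bar>cos ((a + b) / 2)\<bar>"
    by (simp add: sin_diff_sin abs_mult)
  also have "\<dots> \<le> 2 * \<bar>(a - b) / 2\<bar> * 1"
    by (intro mult_mono abs_cos_le_one abs_sin_x_le_abs_x) auto
  finally have sin: "\<bar>sin a - sin b\<bar> \<le> \<bar>a - b\<bar>" by simp
  have "dist (dir a) (dir b) = norm (cos a - cos b, sin a - sin b)" by (simp add: dir_def dist_norm)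
  also have "\<dots> \<le> norm (cos a - cos b) + norm (sin a - sin b)" by (rule norm_Pair_le)
  finally show ?thesis using cos sin by simp
qed

lemma rpol_eq_inverse_FU: assumes n: "is_norm F" shows "rpol F \<theta> = 1 / FU F (dir \<theta>)"
proof -
  have N: "FU F (dir \<theta>) > 0" by (rule FU_pos[OF n dir_neq_0])
  have "0 < \<rho> \<and> FU F (\<rho> * cos \<theta>, \<rho> * sin \<theta>) = 1 \<longleftrightarrow> \<rho> = 1 / FU F (dir \<theta>)" for \<rho>
  proof (cases "\<rho> > 0")
    case True
    then have "FU F (\<rho> * cos \<theta>, \<rho> * sin \<theta>) = \<rho> * FU F (dir \<theta>)"
      using FU_scaleR[OF n, of \<rho> "dir \<theta>"] by (simp add: dir_def)
    then show ?thesis using N True by (simp add: eq_divide_eq)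
  qed (use N in auto)
  then show ?thesis unfolding rpol_def by simp
qed

lemma rpol_pos: "is_norm F \<Longrightarrow> rpol F \<theta> > 0"
  by (simp add: rpol_eq_inverse_FU FU_pos)

lemma FU_rpol_dir: assumes n: "is_norm F" shows "FU F (rpol F \<theta> *\<^sub>R dir \<theta>) = 1"
proof -
  have "FU F (dir \<theta>) > 0" by (rule FU_pos[OF n dir_neq_0])
  then show ?thesis by (simp add: FU_scaleR[OF n] rpol_eq_inverse_FU[OF n])
qed

section \<open>Exposed faces of the unit ball\<close>

definition exposed_face :: "(real \<times> real \<Rightarrow> real) \<Rightarrow> real \<times> real \<Rightarrow> (real \<times> real) set" where
  "exposed_face F h = {u. F u \<le> 1 \<and> inner h u = 1}"

lemma exposed_face_nonempty:
  assumes "is_norm F" "FU F h = 1" shows "exposed_face F h \<noteq> {}"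
proof -
  obtain u where "F u \<le> 1" "inner h u = FU F h" by (rule FU_attained[OF assms(1)])
  then have "u \<in> exposed_face F h" using assms(2) by (simp add: exposed_face_def)
  then show ?thesis by blast
qed

lemma norm_eq_1_if_in_exposed_face:
  assumes n: "is_norm F" and "FU F h = 1" "u \<in> exposed_face F h" shows "F u = 1"
  using inner_le_FU_mult[OF n, of h u] assms(2,3) unfolding exposed_face_def by simp

lemma mem_exposed_face_rpol_dir:
  assumes n: "is_norm F"
  shows "u \<in> exposed_face F (rpol F \<theta> *\<^sub>R dir \<theta>) \<longleftrightarrow> F u \<le> 1 \<and> inner (dir \<theta>) u = FU F (dir \<theta>)"
proof -
  have "inner (rpol F \<theta> *\<^sub>R dir \<theta>) u = inner (dir \<theta>) u / FU F (dir \<theta>)"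
    by (simp add: rpol_eq_inverse_FU[OF n])
  then show ?thesis using FU_pos[OF n dir_neq_0, of \<theta>] by (auto simp: exposed_face_def divide_eq_1_iff)
qed

definition control_of_angle :: "(real \<times> real \<Rightarrow> real) \<Rightarrow> real \<Rightarrow> real \<Rightarrow> real \<times> real" where
  "control_of_angle F \<theta> r' = ((r' * sin \<theta> + rpol F \<theta> * cos \<theta>) / (rpol F \<theta>)^2,
                               (rpol F \<theta> * sin \<theta> - r' * cos \<theta>) / (rpol F \<theta>)^2)"

lemma exposed_face_eq_if_has_derivative:
  assumes n: "is_norm F" and d: "(rpol F has_real_derivative r') (at \<theta>0)"
  shows "exposed_face F (rpol F \<theta>0 *\<^sub>R dir \<theta>0) = {control_of_angle F \<theta>0 r'}"
proof -
  have "u = control_of_angle F \<theta>0 r'" if u: "u \<in> exposed_face F (rpol F \<theta>0 *\<^sub>R dir \<theta>0)" for u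
  proof -
    define r0 where "r0 = rpol F \<theta>0"
    define q where "q \<theta> = rpol F \<theta> * (cos \<theta> * fst u + sin \<theta> * snd u)" for \<theta>
    define A where "A = cos \<theta>0 * fst u + sin \<theta>0 * snd u"
    define B where "B = - sin \<theta>0 * fst u + cos \<theta>0 * snd u"
    have r0: "r0 > 0" unfolding r0_def by (rule rpol_pos[OF n])
    have q: "q \<theta> = inner (rpol F \<theta> *\<^sub>R dir \<theta>) u" for \<theta>
      by (simp add: q_def inner_dir)
    have le: "q \<theta> \<le> F u" for \<theta>
      using inner_le_FU_mult[OF n, of "rpol F \<theta> *\<^sub>R dir \<theta>" u] FU_rpol_dir[OF n, of \<theta>] by (simp add: q)
    have "F u \<le> 1" "q \<theta>0 = 1" using u unfolding exposed_face_def q by simp_all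
    then have max: "q \<theta> \<le> q \<theta>0" for \<theta> using le[of \<theta>] by linarith
    have "(q has_real_derivative (r' * A + r0 * B)) (at \<theta>0)"
      unfolding q_def A_def B_def r0_def using d by (auto intro!: derivative_eq_intros simp: algebra_simps)
    then have B0: "r' * A + r0 * B = 0" by (rule DERIV_local_max[OF _ zero_less_one]) (use max in blast)
    have A1: "r0 * A = 1" using u q[of \<theta>0] by (simp add: exposed_face_def q_def A_def r0_def)
    have "cos \<theta>0 * A - sin \<theta>0 * B = fst u * (cos \<theta>0 * cos \<theta>0 + sin \<theta>0 * sin \<theta>0)"
      "sin \<theta>0 * A + cos \<theta>0 * B = snd u * (cos \<theta>0 * cos \<theta>0 + sin \<theta>0 * sin \<theta>0)"
      unfolding A_def B_def by algebra+
    then have u: "fst u = cos \<theta>0 * A - sin \<theta>0 * B" "snd u = sin \<theta>0 * A + cos \<theta>0 * B"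
      unfolding sin_cos_squared_add3 by simp_all
    have Av: "A = 1 / r0" using A1 r0 by (simp add: field_simps)
    have Bv: "B = - r' / r0^2" using B0 Av r0 by (simp add: field_simps power2_eq_square)
    have "fst u = (r' * sin \<theta>0 + r0 * cos \<theta>0) / r0^2" "snd u = (r0 * sin \<theta>0 - r' * cos \<theta>0) / r0^2"
      using u Av Bv r0 by (simp_all add: field_simps power2_eq_square)
    then show ?thesis unfolding control_of_angle_def r0_def by (simp add: prod_eq_iff)
  qed
  then show ?thesis using exposed_face_nonempty[OF n FU_rpol_dir[OF n]] by blast
qed

lemma exposed_face_upper_semicontinuous:
  assumes n: "is_norm F" and u0: "exposed_face F (rpol F \<theta>0 *\<^sub>R dir \<theta>0) = {u0}" and e: "\<epsilon> > 0"
  obtains \<eta> where "\<eta> > 0"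
    "\<And>\<theta> u. \<bar>\<theta> - \<theta>0\<bar> < \<eta> \<Longrightarrow> u \<in> exposed_face F (rpol F \<theta> *\<^sub>R dir \<theta>) \<Longrightarrow> dist u u0 < \<epsilon>"
proof -
  note face = mem_exposed_face_rpol_dir[OF n]
  obtain R where R: "R > 0" "\<And>u. F u \<le> 1 \<Longrightarrow> norm u \<le> R" by (rule bounded_unit_ball[OF n]) blast
  have u0F: "F u0 \<le> 1" "inner (dir \<theta>0) u0 = FU F (dir \<theta>0)" using u0 face by blast+
  define K where "K = {u. F u \<le> 1} \<inter> {u. \<epsilon> \<le> dist u u0}"
  have "compact K"
    unfolding K_def by (intro compact_Int_closed compact_unit_ball[OF n] closed_Collect_le continuous_intros)
  show ?thesis
  proof (cases "K = {}")
    case True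
    then show ?thesis using that[of 1] face by (force simp: K_def not_le)
  next
    case False
    moreover have "continuous_on K (inner (dir \<theta>0))" by (intro continuous_intros)
    ultimately obtain u1 where u1: "u1 \<in> K" "\<And>u. u \<in> K \<Longrightarrow> inner (dir \<theta>0) u \<le> inner (dir \<theta>0) u1"
      using continuous_attains_sup[OF \<open>compact K\<close>, of "inner (dir \<theta>0)"] by fastforce
    have "u1 \<noteq> u0" using u1(1) e by (auto simp: K_def)
    then have "inner (dir \<theta>0) u1 \<noteq> FU F (dir \<theta>0)" using u1(1) u0 face[of u1 \<theta>0] by (auto simp: K_def)
    \<comment> \<open>the gap between \<open>u0\<close> and the best competitor at distance \<open>\<ge> \<epsilon>\<close> survives small rotations\<close>
    then have \<gamma>: "FU F (dir \<theta>0) - inner (dir \<theta>0) u1 > 0"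
      using inner_le_FU[OF n, of u1 "dir \<theta>0"] u1(1) by (auto simp: K_def)
    define \<gamma> where "\<gamma> = FU F (dir \<theta>0) - inner (dir \<theta>0) u1"
    define \<eta> where "\<eta> = \<gamma> / (4 * R)"
    have small: "\<bar>inner (dir \<theta>) w - inner (dir \<theta>0) w\<bar> < \<gamma> / 2"
      if "\<bar>\<theta> - \<theta>0\<bar> < \<eta>" "F w \<le> 1" for \<theta> w
    proof -
      have "\<bar>inner (dir \<theta>) w - inner (dir \<theta>0) w\<bar> \<le> dist (dir \<theta>) (dir \<theta>0) * norm w"
        unfolding dist_norm inner_diff_left[symmetric] by (rule Cauchy_Schwarz_ineq2)
      also have "\<dots> \<le> (2 * \<bar>\<theta> - \<theta>0\<bar>) * R" by (intro mult_mono dist_dir_le R(2) that(2)) auto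
      also have "\<dots> < (2 * \<eta>) * R" using that(1) R by (intro mult_strict_right_mono) auto
      also have "\<dots> = \<gamma> / 2" using R(1) by (simp add: \<eta>_def)
      finally show ?thesis .
    qed
    show ?thesis
    proof (rule that)
      show "\<eta> > 0" using \<gamma> R by (simp add: \<eta>_def \<gamma>_def)
      fix \<theta> u assume \<theta>: "\<bar>\<theta> - \<theta>0\<bar> < \<eta>" and u: "u \<in> exposed_face F (rpol F \<theta> *\<^sub>R dir \<theta>)"
      show "dist u u0 < \<epsilon>"
      proof (rule ccontr)
        assume "\<not> dist u u0 < \<epsilon>"
        then have "inner (dir \<theta>0) u \<le> inner (dir \<theta>0) u1" using u face by (intro u1(2)) (auto simp: K_def)
        moreover have "inner (dir \<theta>) u0 \<le> FU F (dir \<theta>)" by (rule inner_le_FU[OF n u0F(1)])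
        moreover have uF: "F u \<le> 1" "inner (dir \<theta>) u = FU F (dir \<theta>)" using u face by blast+
        moreover have "inner (dir \<theta>) u - inner (dir \<theta>0) u < \<gamma> / 2"
          "inner (dir \<theta>0) u0 - inner (dir \<theta>) u0 < \<gamma> / 2"
          using small[OF \<theta> uF(1)] small[OF \<theta> u0F(1)] unfolding abs_less_iff by linarith+
        ultimately show False using u0F(2) unfolding \<gamma>_def by argo
      qed
    qed
  qed
qed

lemma FU_dir_has_derivative_if_exposed_face_singleton:
  assumes n: "is_norm F" and u0: "exposed_face F (rpol F \<theta>0 *\<^sub>R dir \<theta>0) = {u0}"
  shows "((\<lambda>\<theta>. FU F (dir \<theta>)) has_real_derivative - sin \<theta>0 * fst u0 + cos \<theta>0 * snd u0) (at \<theta>0)"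
proof -
  note face = mem_exposed_face_rpol_dir[OF n]
  have u0F: "F u0 \<le> 1" "inner (dir \<theta>0) u0 = FU F (dir \<theta>0)" using u0 face by blast+
  \<comment> \<open>\<open>M \<ge> 0\<close> vanishes at \<open>\<theta>0\<close>, and since maximisers converge to \<open>u0\<close> it is \<open>o(\<theta> - \<theta>0)\<close>\<close>
  define M where "M \<theta> = FU F (dir \<theta>) - inner (dir \<theta>) u0" for \<theta>
  have M0: "M \<theta>0 = 0" using u0F by (simp add: M_def)
  have Mnn: "0 \<le> M \<theta>" for \<theta> using inner_le_FU[OF n u0F(1)] by (simp add: M_def)
  have Mle: "M \<theta> \<le> 2 * \<bar>\<theta> - \<theta>0\<bar> * dist w u0" if w: "w \<in> exposed_face F (rpol F \<theta> *\<^sub>R dir \<theta>)" for \<theta> w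
  proof -
    have "inner (dir \<theta>0) w \<le> FU F (dir \<theta>0)" using w face inner_le_FU[OF n] by blast
    then have "M \<theta> \<le> inner (dir \<theta> - dir \<theta>0) (w - u0)"
      using w face u0F by (simp add: M_def inner_diff_left inner_diff_right)
    also have "\<dots> \<le> dist (dir \<theta>) (dir \<theta>0) * dist w u0"
      unfolding dist_norm by (rule norm_cauchy_schwarz)
    also have "\<dots> \<le> 2 * \<bar>\<theta> - \<theta>0\<bar> * dist w u0" by (intro mult_right_mono dist_dir_le) auto
    finally show ?thesis .
  qed
  have "(M has_real_derivative 0) (at \<theta>0)"
    unfolding has_field_derivative_iff M0
  proof (rule tendstoI)
    fix e :: real assume e: "e > 0"
    then have "e/4 > 0" by simp
    then obtain \<eta> where \<eta>: "\<eta> > 0"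
      "\<And>\<theta> u. \<bar>\<theta> - \<theta>0\<bar> < \<eta> \<Longrightarrow> u \<in> exposed_face F (rpol F \<theta> *\<^sub>R dir \<theta>) \<Longrightarrow> dist u u0 < e/4"
      by (rule exposed_face_upper_semicontinuous[OF n u0]) blast
    show "\<forall>\<^sub>F y in at \<theta>0. dist ((M y - 0) / (y - \<theta>0)) 0 < e"
      unfolding eventually_at
    proof (intro exI[of _ \<eta>] conjI ballI impI)
      fix y assume y: "y \<noteq> \<theta>0 \<and> dist y \<theta>0 < \<eta>"
      obtain w where "w \<in> exposed_face F (rpol F y *\<^sub>R dir y)"
        using exposed_face_nonempty[OF n FU_rpol_dir[OF n]] by blast
      moreover have y': "\<bar>y - \<theta>0\<bar> < \<eta>" "\<bar>y - \<theta>0\<bar> > 0" using y by (auto simp: dist_real_def)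
      ultimately have "M y \<le> 2 * \<bar>y - \<theta>0\<bar> * (e/4)"
        using Mle \<eta>(2) by (meson abs_ge_zero less_imp_le mult_left_mono order.trans zero_le_mult_iff
            zero_le_numeral)
      then have "M y \<le> e/2 * \<bar>y - \<theta>0\<bar>" by simp
      then have "M y / \<bar>y - \<theta>0\<bar> \<le> e/2" using y' by (simp add: divide_le_eq)
      moreover have "dist ((M y - 0) / (y - \<theta>0)) 0 = M y / \<bar>y - \<theta>0\<bar>"
        using Mnn[of y] by (simp add: dist_real_def abs_divide)
      ultimately show "dist ((M y - 0) / (y - \<theta>0)) 0 < e" using e by linarith
    qed (rule \<eta>(1))
  qed
  then have "((\<lambda>\<theta>. M \<theta> + (cos \<theta> * fst u0 + sin \<theta> * snd u0)) has_real_derivative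
      0 + (- sin \<theta>0 * fst u0 + cos \<theta>0 * snd u0)) (at \<theta>0)"
    by (rule DERIV_add) (auto intro!: derivative_eq_intros)
  then show ?thesis by (simp add: M_def inner_dir)
qed

lemma rpol_differentiable_if_exposed_face_singleton:
  assumes n: "is_norm F" and u0: "exposed_face F (rpol F \<theta>0 *\<^sub>R dir \<theta>0) = {u0}"
  shows "rpol F differentiable (at \<theta>0)"
proof -
  note FU_dir_has_derivative_if_exposed_face_singleton[OF n u0]
  then have "(\<lambda>\<theta>. inverse (FU F (dir \<theta>))) differentiable (at \<theta>0)"
    using DERIV_inverse_fun FU_pos[OF n dir_neq_0, of \<theta>0] unfolding real_differentiable_def by fastforce
  moreover have "rpol F = (\<lambda>\<theta>. inverse (FU F (dir \<theta>)))"
    by (simp add: fun_eq_iff rpol_eq_inverse_FU[OF n] inverse_eq_divide)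
  ultimately show ?thesis by simp
qed

section \<open>Absolutely continuous functions\<close>

definition nonoverlapping_in :: "real set \<Rightarrow> nat \<Rightarrow> (nat \<Rightarrow> real) \<Rightarrow> (nat \<Rightarrow> real) \<Rightarrow> bool" where
  "nonoverlapping_in S n a b \<longleftrightarrow>
     (\<forall>i<n. a i \<le> b i \<and> {a i..b i} \<subseteq> S) \<and> disjoint_family_on (\<lambda>i. {a i<..<b i}) {..<n}"

lemma abs_cont_on_iff:
  "abs_cont_on S f \<longleftrightarrow> (\<forall>e>0. \<exists>d>0. \<forall>n a b. nonoverlapping_in S n a b \<and> (\<Sum>i<n. b i - a i) < d \<longrightarrow>
      (\<Sum>i<n. norm (f (b i) - f (a i))) < e)"
  unfolding abs_cont_on_def nonoverlapping_in_def by (simp only: conj_assoc)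

lemma abs_cont_onE:
  assumes "abs_cont_on S f" "e > 0"
  obtains d where "d > 0" "\<And>n a b. nonoverlapping_in S n a b \<Longrightarrow> (\<Sum>i<n. b i - a i) < d \<Longrightarrow>
      (\<Sum>i<n. norm (f (b i) - f (a i))) < e"
proof -
  have "\<exists>d>0. \<forall>n a b. nonoverlapping_in S n a b \<and> (\<Sum>i<n. b i - a i) < d \<longrightarrow>
      (\<Sum>i<n. norm (f (b i) - f (a i))) < e"
    using assms(1)[unfolded abs_cont_on_iff, rule_format, OF assms(2)] .
  then obtain d where "d > 0" "\<forall>n a b. nonoverlapping_in S n a b \<and> (\<Sum>i<n. b i - a i) < d \<longrightarrow>
      (\<Sum>i<n. norm (f (b i) - f (a i))) < e" by blast
  then show ?thesis by (intro that) auto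
qed

lemma abs_cont_onI:
  assumes "\<And>e. e > 0 \<Longrightarrow> \<exists>d>0. \<forall>n a b. nonoverlapping_in S n a b \<and> (\<Sum>i<n. b i - a i) < d \<longrightarrow>
      (\<Sum>i<n. norm (f (b i) - f (a i))) < e"
  shows "abs_cont_on S f"
  unfolding abs_cont_on_iff by (intro allI impI assms)

lemma abs_cont_on_finite_family:
  fixes \<alpha> \<beta> :: "'k \<Rightarrow> real"
  assumes D: "\<And>n a b. nonoverlapping_in S n a b \<Longrightarrow> (\<Sum>i<n. b i - a i) < d \<Longrightarrow>
      (\<Sum>i<n. norm (f (b i) - f (a i))) < e"
    and E: "finite E" "\<forall>K\<in>E. \<alpha> K \<le> \<beta> K \<and> {\<alpha> K..\<beta> K} \<subseteq> S"
      "disjoint_family_on (\<lambda>K. {\<alpha> K<..<\<beta> K}) E" "(\<Sum>K\<in>E. \<beta> K - \<alpha> K) < d"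
  shows "(\<Sum>K\<in>E. norm (f (\<beta> K) - f (\<alpha> K))) < e"
proof -
  have "{0..<card E} = {..<card E}" by auto
  then obtain h where h: "bij_betw h {..<card E} E"
    using ex_bij_betw_nat_finite[OF E(1)] by auto
  have reindex: "(\<Sum>K\<in>E. g K) = (\<Sum>i<card E. g (h i))" for g :: "'k \<Rightarrow> real"
    using sum.reindex_bij_betw[OF h, of g] by simp
  have "nonoverlapping_in S (card E) (\<alpha> \<circ> h) (\<beta> \<circ> h)"
    unfolding nonoverlapping_in_def disjoint_family_on_def
  proof (intro conjI allI impI ballI)
    fix i j assume "i \<in> {..<card E}" "j \<in> {..<card E}" "i \<noteq> j"
    then have "h i \<in> E" "h j \<in> E" "h i \<noteq> h j"
      using h by (auto simp: bij_betw_def dest: inj_onD)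
    then show "{(\<alpha> \<circ> h) i<..<(\<beta> \<circ> h) i} \<inter> {(\<alpha> \<circ> h) j<..<(\<beta> \<circ> h) j} = {}"
      using E(3) unfolding disjoint_family_on_def by simp
  qed (use bij_betwE[OF h] E(2) in auto)
  from D[OF this] show ?thesis using E(4) unfolding reindex by simp
qed

lemma abs_cont_on_imp_continuous_on:
  assumes "abs_cont_on {c..d} f" shows "continuous_on {c..d} f"
  unfolding continuous_on_iff
proof (intro ballI allI impI)
  fix x e assume x: "x \<in> {c..d}" and e: "(0::real) < e"
  obtain r where r: "r > 0" "\<And>n a b. nonoverlapping_in {c..d} n a b \<Longrightarrow> (\<Sum>i<n. b i - a i) < r \<Longrightarrow>
      (\<Sum>i<n. norm (f (b i) - f (a i))) < e"
    by (rule abs_cont_onE[OF assms e]) blast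
  have close: "norm (f y - f x) < e" if "x \<le> y" "{x..y} \<subseteq> {c..d}" "y - x < r" for x y
    using r(2)[of 1 "\<lambda>_. x" "\<lambda>_. y"] that by (simp add: nonoverlapping_in_def disjoint_family_on_def)
  show "\<exists>r>0. \<forall>y\<in>{c..d}. dist y x < r \<longrightarrow> dist (f y) (f x) < e"
  proof (intro exI[of _ r] conjI ballI impI)
    fix y assume "y \<in> {c..d}" "dist y x < r"
    then show "dist (f y) (f x) < e"
      using close[of x y] close[of y x] x by (cases "x \<le> y") (auto simp: dist_norm dist_real_def norm_minus_commute)
  qed (rule r(1))
qed

lemma abs_cont_on_add:
  assumes "abs_cont_on S f" "abs_cont_on S g" shows "abs_cont_on S (\<lambda>t. f t + g t)"
proof (rule abs_cont_onI)
  fix e :: real assume "e > 0"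
  then have e2: "e/2 > 0" by simp
  obtain d1 where d1: "d1 > 0" and D1: "\<And>n a b. nonoverlapping_in S n a b \<Longrightarrow> (\<Sum>i<n. b i - a i) < d1 \<Longrightarrow>
      (\<Sum>i<n. norm (f (b i) - f (a i))) < e/2"
    by (rule abs_cont_onE[OF assms(1) e2]) blast
  obtain d2 where d2: "d2 > 0" and D2: "\<And>n a b. nonoverlapping_in S n a b \<Longrightarrow> (\<Sum>i<n. b i - a i) < d2 \<Longrightarrow>
      (\<Sum>i<n. norm (g (b i) - g (a i))) < e/2"
    by (rule abs_cont_onE[OF assms(2) e2]) blast
  show "\<exists>d>0. \<forall>n a b. nonoverlapping_in S n a b \<and> (\<Sum>i<n. b i - a i) < d \<longrightarrow>
      (\<Sum>i<n. norm (f (b i) + g (b i) - (f (a i) + g (a i)))) < e"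
  proof (intro exI[of _ "min d1 d2"] conjI allI impI)
    fix n a b assume H: "nonoverlapping_in S n a b \<and> (\<Sum>i<n. b i - a i) < min d1 d2"
    have "(\<Sum>i<n. norm (f (b i) + g (b i) - (f (a i) + g (a i))))
        \<le> (\<Sum>i<n. norm (f (b i) - f (a i))) + (\<Sum>i<n. norm (g (b i) - g (a i)))"
      unfolding sum.distrib[symmetric] by (intro sum_mono) (metis add_diff_add norm_triangle_ineq)
    also have "\<dots> < e/2 + e/2" using D1[of n a b] D2[of n a b] H by (intro add_strict_mono) auto
    finally show "(\<Sum>i<n. norm (f (b i) + g (b i) - (f (a i) + g (a i)))) < e" by simp
  qed (use d1 d2 in auto)
qed

lemma abs_cont_on_compose_lipschitz:
  assumes f: "abs_cont_on S f" and h: "L-lipschitz_on UNIV h" shows "abs_cont_on S (\<lambda>t. h (f t))"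
proof (rule abs_cont_onI)
  fix e :: real assume e: "e > 0"
  have L: "L + 1 > 0" using lipschitz_on_nonneg[OF h] by simp
  then have "e / (L + 1) > 0" using e by simp
  then obtain d where d: "d > 0" "\<And>n a b. nonoverlapping_in S n a b \<Longrightarrow> (\<Sum>i<n. b i - a i) < d \<Longrightarrow>
      (\<Sum>i<n. norm (f (b i) - f (a i))) < e / (L + 1)"
    by (rule abs_cont_onE[OF f]) blast
  show "\<exists>d>0. \<forall>n a b. nonoverlapping_in S n a b \<and> (\<Sum>i<n. b i - a i) < d \<longrightarrow>
      (\<Sum>i<n. norm (h (f (b i)) - h (f (a i)))) < e"
  proof (intro exI[of _ d] conjI allI impI)
    fix n a b assume H: "nonoverlapping_in S n a b \<and> (\<Sum>i<n. b i - a i) < d"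
    have "norm (h x - h y) \<le> (L + 1) * norm (x - y)" for x y
      using lipschitz_on_normD[OF h, of x y] mult_right_mono[of L "L + 1" "norm (x - y)"] by simp
    then have "(\<Sum>i<n. norm (h (f (b i)) - h (f (a i)))) \<le> (\<Sum>i<n. (L + 1) * norm (f (b i) - f (a i)))"
      by (intro sum_mono)
    also have "\<dots> < (L + 1) * (e / (L + 1))"
      unfolding sum_distrib_left[symmetric] using d(2)[of n a b] H L by (intro mult_strict_left_mono) auto
    finally show "(\<Sum>i<n. norm (h (f (b i)) - h (f (a i)))) < e" using L by simp
  qed (rule d(1))
qed

lemma abs_cont_on_bounded_linear:
  assumes "abs_cont_on S f" "bounded_linear h" shows "abs_cont_on S (\<lambda>t. h (f t))"
proof -
  obtain B where "B-lipschitz_on UNIV h" by (rule bounded_linear.lipschitz_boundE[OF assms(2)])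
  then show ?thesis by (rule abs_cont_on_compose_lipschitz[OF assms(1)])
qed

lemma abs_cont_on_ident: "abs_cont_on S (\<lambda>t::real. t)"
proof (rule abs_cont_onI)
  fix e :: real assume "e > 0"
  moreover have "(\<Sum>i<n. norm (b i - a i)) = (\<Sum>i<n. b i - a i)" if "nonoverlapping_in S n a b" for n a b
    using that by (intro sum.cong) (auto simp: nonoverlapping_in_def)
  ultimately show "\<exists>d>0. \<forall>n a b. nonoverlapping_in S n a b \<and> (\<Sum>i<n. b i - a i) < d \<longrightarrow>
      (\<Sum>i<n. norm (b i - a i)) < e" by auto
qed

lemma abs_cont_on_const: "abs_cont_on S (\<lambda>t. c)"
  by (rule abs_cont_onI) (auto intro: exI[of _ 1])

lemma abs_cont_on_diff:
  assumes "abs_cont_on S f" "abs_cont_on S g" shows "abs_cont_on S (\<lambda>t. f t - g t)"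
  using abs_cont_on_add[OF assms(1) abs_cont_on_bounded_linear[OF assms(2) bounded_linear_minus[OF bounded_linear_ident]]]
  by simp

lemma abs_cont_on_scaleR_ident: "abs_cont_on S (\<lambda>t. t *\<^sub>R v)"
  by (rule abs_cont_on_bounded_linear[OF abs_cont_on_ident bounded_linear_scaleR_left])

lemma abs_cont_on_compose_affine:
  assumes f: "abs_cont_on S f" and c: "c \<noteq> 0" and T: "\<And>\<tau>. \<tau> \<in> T \<Longrightarrow> s + c * \<tau> \<in> S"
  shows "abs_cont_on T (\<lambda>\<tau>. f (s + c * \<tau>))"
proof (rule abs_cont_onI)
  fix e :: real assume "e > 0"
  then obtain d where d: "d > 0" "\<And>n a b. nonoverlapping_in S n a b \<Longrightarrow> (\<Sum>i<n. b i - a i) < d \<Longrightarrow>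
      (\<Sum>i<n. norm (f (b i) - f (a i))) < e"
    by (rule abs_cont_onE[OF f]) blast
  show "\<exists>d>0. \<forall>n a b. nonoverlapping_in T n a b \<and> (\<Sum>i<n. b i - a i) < d \<longrightarrow>
      (\<Sum>i<n. norm (f (s + c * b i) - f (s + c * a i))) < e"
  proof (intro exI[of _ "d / \<bar>c\<bar>"] conjI allI impI)
    fix n a b assume H: "nonoverlapping_in T n a b \<and> (\<Sum>i<n. b i - a i) < d / \<bar>c\<bar>"
    define a' where "a' i = min (s + c * a i) (s + c * b i)" for i
    define b' where "b' i = max (s + c * a i) (s + c * b i)" for i
    have c_cases: "c > 0 \<or> c < 0" using c by auto
    have preimage_closed: "(x - s) / c \<in> {a i..b i}" if "a i \<le> b i" "x \<in> {a' i..b' i}" for i x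
      using c_cases that by (auto simp: a'_def b'_def field_simps)
    have preimage_open: "(x - s) / c \<in> {a i<..<b i}" if "a i \<le> b i" "x \<in> {a' i<..<b' i}" for i x
      using c_cases that by (auto simp: a'_def b'_def field_simps)
    have "nonoverlapping_in S n a' b'"
      unfolding nonoverlapping_in_def disjoint_family_on_def
    proof (intro conjI allI impI ballI subsetI)
      fix i x assume "i < n" "x \<in> {a' i..b' i}"
      then have "(x - s) / c \<in> T" using preimage_closed[of i x] H by (force simp: nonoverlapping_in_def)
      then show "x \<in> S" using T c by force
    next
      fix i j assume ij: "i \<in> {..<n}" "j \<in> {..<n}" "i \<noteq> j"
      show "{a' i<..<b' i} \<inter> {a' j<..<b' j} = {}"
      proof (rule ccontr)
        assume "{a' i<..<b' i} \<inter> {a' j<..<b' j} \<noteq> {}"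
        then obtain x where "x \<in> {a' i<..<b' i}" "x \<in> {a' j<..<b' j}" by blast
        then have "(x - s) / c \<in> {a i<..<b i} \<inter> {a j<..<b j}"
          using preimage_open H ij by (auto simp: nonoverlapping_in_def)
        then show False using H ij unfolding nonoverlapping_in_def disjoint_family_on_def by blast
      qed
    qed (auto simp: a'_def b'_def)
    moreover have "b' i - a' i = \<bar>c\<bar> * (b i - a i)" if "a i \<le> b i" for i
      using c_cases that by (auto simp: a'_def b'_def min_def max_def mult_le_cancel_left algebra_simps)
    then have "(\<Sum>i<n. b' i - a' i) = \<bar>c\<bar> * (\<Sum>i<n. b i - a i)"
      unfolding sum_distrib_left using H by (intro sum.cong) (auto simp: nonoverlapping_in_def)
    ultimately have "(\<Sum>i<n. norm (f (b' i) - f (a' i))) < e"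
      using H c d(2) by (simp add: pos_less_divide_eq mult.commute)
    moreover have "norm (f (b' i) - f (a' i)) = norm (f (s + c * b i) - f (s + c * a i))" for i
      by (auto simp: a'_def b'_def min_def max_def norm_minus_commute)
    ultimately show "(\<Sum>i<n. norm (f (s + c * b i) - f (s + c * a i))) < e" by simp
  qed (use d c in auto)
qed

lemma abs_cont_on_affine: "abs_cont_on S (\<lambda>t. p * t + q)"
  by (intro abs_cont_on_add abs_cont_on_bounded_linear[OF abs_cont_on_ident] bounded_linear_mult_right
      abs_cont_on_const)

lemma measure_continuous_image_interval_le:
  fixes f :: "real \<Rightarrow> real"
  assumes K: "K = cbox p q" "K \<noteq> {}" and cont: "continuous_on K f"
  obtains \<alpha> \<beta> where "\<alpha> \<le> \<beta>" "{\<alpha>..\<beta>} \<subseteq> K" "f ` K \<in> lmeasurable"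
    "measure lebesgue (f ` K) \<le> norm (f \<beta> - f \<alpha>)"
proof -
  have "compact K" using K(1) by simp
  obtain s1 where s1: "s1 \<in> K" "\<forall>x\<in>K. f s1 \<le> f x" using continuous_attains_inf[OF \<open>compact K\<close> K(2) cont] by blast
  obtain s2 where s2: "s2 \<in> K" "\<forall>x\<in>K. f x \<le> f s2" using continuous_attains_sup[OF \<open>compact K\<close> K(2) cont] by blast
  have fK: "f ` K \<in> lmeasurable" using compact_continuous_image[OF cont \<open>compact K\<close>] by (rule lmeasurable_compact)
  have "measure lebesgue (f ` K) \<le> measure lebesgue {f s1..f s2}"
    using s1 s2 fmeasurableD[OF fK] by (intro measure_mono_fmeasurable) auto
  also have "\<dots> = norm (f (max s1 s2) - f (min s1 s2))" using s1 s2 by (auto simp: min_def max_def)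
  finally have le: "measure lebesgue (f ` K) \<le> norm (f (max s1 s2) - f (min s1 s2))" .
  have sub: "{min s1 s2..max s1 s2} \<subseteq> K" using s1(1) s2(1) K(1) by auto
  show ?thesis by (rule that[OF _ sub fK le]) simp
qed

lemma measure_image_intervals_le:
  fixes f :: "real \<Rightarrow> real"
  assumes D: "\<And>n a b. nonoverlapping_in {c..d} n a b \<Longrightarrow> (\<Sum>i<n. b i - a i) < \<delta> \<Longrightarrow>
      (\<Sum>i<n. norm (f (b i) - f (a i))) < e"
    and cont: "continuous_on {c..d} f" and E: "finite E"
    and intervals: "\<And>K. K \<in> E \<Longrightarrow> \<exists>p q. K = cbox p q \<and> K \<noteq> {} \<and> K \<subseteq> {c..d}"
    and pw: "pairwise (\<lambda>A B. interior A \<inter> interior B = {}) E" and small: "measure lebesgue (\<Union>E) < \<delta>"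
  shows "measure lebesgue (\<Union>K\<in>E. f ` K) \<le> e"
proof -
  have "\<exists>\<alpha> \<beta>. \<alpha> \<le> \<beta> \<and> {\<alpha>..\<beta>} \<subseteq> K \<and> f ` K \<in> lmeasurable \<and>
      measure lebesgue (f ` K) \<le> norm (f \<beta> - f \<alpha>)" if KE: "K \<in> E" for K
  proof -
    obtain p q where K: "K = cbox p q" "K \<noteq> {}" "K \<subseteq> {c..d}" using intervals[OF KE] by blast
    obtain \<alpha> \<beta> where "\<alpha> \<le> \<beta>" "{\<alpha>..\<beta>} \<subseteq> K" "f ` K \<in> lmeasurable"
      "measure lebesgue (f ` K) \<le> norm (f \<beta> - f \<alpha>)"
      by (rule measure_continuous_image_interval_le[OF K(1,2) continuous_on_subset[OF cont K(3)]]) blast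
    then show ?thesis by blast
  qed
  then obtain \<alpha> \<beta> where ab: "\<And>K. K \<in> E \<Longrightarrow> \<alpha> K \<le> \<beta> K \<and> {\<alpha> K..\<beta> K} \<subseteq> K \<and> f ` K \<in> lmeasurable \<and>
      measure lebesgue (f ` K) \<le> norm (f (\<beta> K) - f (\<alpha> K))"
    by metis
  have interior: "{\<alpha> K<..<\<beta> K} \<subseteq> interior K" if "K \<in> E" for K
    using ab[OF that] by (intro interior_maximal) auto
  have dj: "disjoint_family_on (\<lambda>K. {\<alpha> K<..<\<beta> K}) E"
    unfolding disjoint_family_on_def
  proof (intro ballI impI)
    fix K1 K2 assume K12: "K1 \<in> E" "K2 \<in> E" "K1 \<noteq> K2"
    then have "interior K1 \<inter> interior K2 = {}" using pw unfolding pairwise_def by blast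
    then show "{\<alpha> K1<..<\<beta> K1} \<inter> {\<alpha> K2<..<\<beta> K2} = {}" using interior[OF K12(1)] interior[OF K12(2)] by blast
  qed
  have "(\<Sum>K\<in>E. \<beta> K - \<alpha> K) = (\<Sum>K\<in>E. measure lebesgue {\<alpha> K<..<\<beta> K})"
    using ab by (intro sum.cong) auto
  also have "\<dots> = measure lebesgue (\<Union>K\<in>E. {\<alpha> K<..<\<beta> K})"
    by (rule measure_finite_Union[symmetric]) (use E dj ab in auto)
  also have "\<dots> \<le> measure lebesgue (\<Union>E)"
  proof (rule measure_mono_fmeasurable)
    show "(\<Union>K\<in>E. {\<alpha> K<..<\<beta> K}) \<subseteq> \<Union>E" using interior interior_subset by blast
    show "(\<Union>K\<in>E. {\<alpha> K<..<\<beta> K}) \<in> sets lebesgue" using E by (intro sets.finite_UN) auto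
    show "\<Union>E \<in> lmeasurable" using E intervals by (intro fmeasurable.finite_Union) auto
  qed
  finally have len: "(\<Sum>K\<in>E. \<beta> K - \<alpha> K) < \<delta>" using small by simp
  have "measure lebesgue (\<Union>K\<in>E. f ` K) \<le> (\<Sum>K\<in>E. measure lebesgue (f ` K))"
    using ab E by (intro measure_UNION_le) auto
  also have "\<dots> \<le> (\<Sum>K\<in>E. norm (f (\<beta> K) - f (\<alpha> K)))" using ab by (intro sum_mono) auto
  also have "\<dots> < e"
  proof (intro abs_cont_on_finite_family[OF D E _ dj len] ballI)
    fix K assume "K \<in> E"
    then show "\<alpha> K \<le> \<beta> K \<and> {\<alpha> K..\<beta> K} \<subseteq> {c..d}" using ab[of K] intervals[of K] by blast
  qed
  finally show ?thesis by simp
qed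

lemma abs_cont_on_negligible_image:
  fixes f :: "real \<Rightarrow> real"
  assumes ac: "abs_cont_on {c..d} f" and N: "negligible N" "N \<subseteq> {c..d}"
  shows "negligible (f ` N)"
  unfolding negligible_outer_le
proof (intro allI impI)
  fix e :: real assume e: "e > 0"
  obtain \<delta> where \<delta>: "\<delta> > 0" and D: "\<And>n a b. nonoverlapping_in {c..d} n a b \<Longrightarrow> (\<Sum>i<n. b i - a i) < \<delta> \<Longrightarrow>
      (\<Sum>i<n. norm (f (b i) - f (a i))) < e"
    by (rule abs_cont_onE[OF ac e]) blast
  have Nm: "N \<in> lmeasurable" "measure lebesgue N = 0"
    using N(1) by (auto simp: negligible_imp_measurable negligible_imp_measure0)
  have Nc: "N \<subseteq> cbox c d" using N(2) by simp
  obtain \<D> where \<D>: "countable \<D>" "\<And>K. K \<in> \<D> \<Longrightarrow> K \<subseteq> cbox c d \<and> K \<noteq> {} \<and> (\<exists>p q. K = cbox p q)"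
    and pw: "pairwise (\<lambda>A B. interior A \<inter> interior B = {}) \<D>"
    and "\<And>u v. cbox u v \<in> \<D> \<Longrightarrow> \<exists>n. \<forall>i \<in> Basis. v \<bullet> i - u \<bullet> i = (d \<bullet> i - c \<bullet> i) / 2^n"
    and "\<And>K. K \<in> \<D> \<Longrightarrow> box c d \<noteq> {} \<Longrightarrow> interior K \<noteq> {}"
    and cover: "N \<subseteq> \<Union>\<D>" "\<Union>\<D> \<in> lmeasurable" "measure lebesgue (\<Union>\<D>) \<le> measure lebesgue N + \<delta>/2"
    by (rule measurable_outer_intervals_bounded[OF Nm(1) Nc, of "\<delta>/2"]) (use \<delta> in auto)
  have bound: "measure lebesgue (\<Union>K\<in>E. f ` K) \<le> e" if "E \<subseteq> \<D>" "finite E" for E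
  proof (rule measure_image_intervals_le[OF D abs_cont_on_imp_continuous_on[OF ac] that(2)])
    show "\<exists>p q. K = cbox p q \<and> K \<noteq> {} \<and> K \<subseteq> {c..d}" if KE: "K \<in> E" for K
      using \<D>(2) that \<open>E \<subseteq> \<D>\<close> by fastforce
    show "pairwise (\<lambda>A B. interior A \<inter> interior B = {}) E" using pw pairwise_subset that(1) by blast
    have "\<Union>E \<in> lmeasurable" using that \<D>(2) by (intro fmeasurable.finite_Union) auto
    then have "measure lebesgue (\<Union>E) \<le> measure lebesgue (\<Union>\<D>)"
      using that(1) cover(2) by (intro measure_mono_fmeasurable) (auto dest: fmeasurableD)
    then show "measure lebesgue (\<Union>E) < \<delta>" using cover(3) Nm(2) \<delta> by simp
  qed
  have Kmeas: "f ` K \<in> lmeasurable" if K: "K \<in> \<D>" for K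
  proof -
    obtain p q where "K = cbox p q" "K \<subseteq> {c..d}" using \<D>(2)[OF K] by auto
    then have "compact (f ` K)"
      using continuous_on_subset[OF abs_cont_on_imp_continuous_on[OF ac]] by (auto intro: compact_continuous_image)
    then show ?thesis by (rule lmeasurable_compact)
  qed
  have "(\<Union>K\<in>\<D>. f ` K) \<in> lmeasurable" by (rule fmeasurable_UN_bound[OF \<D>(1) Kmeas bound])
  moreover have "measure lebesgue (\<Union>K\<in>\<D>. f ` K) \<le> e" by (rule measure_UN_bound[OF \<D>(1) Kmeas bound])
  moreover have "f ` N \<subseteq> (\<Union>K\<in>\<D>. f ` K)" using cover(1) by blast
  ultimately show "\<exists>T. f ` N \<subseteq> T \<and> T \<in> lmeasurable \<and> measure lebesgue T \<le> e" by blast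
qed

lemma abs_cont_on_le_if_upper_right_deriv_nonpos:
  fixes k :: "real \<Rightarrow> real"
  assumes ac: "abs_cont_on {c..d} k" and cd: "c \<le> d" and N: "negligible N"
    and der: "\<And>t e. t \<in> {c..<d} \<Longrightarrow> t \<notin> N \<Longrightarrow> e > 0 \<Longrightarrow>
        \<exists>\<delta>>0. \<forall>s. t < s \<and> s < t + \<delta> \<and> s \<le> d \<longrightarrow> k s \<le> k t + e * (s - t)"
  shows "k d \<le> k c"
proof (rule ccontr)
  assume "\<not> k d \<le> k c"
  then have cd': "c < d" and gt: "k c < k d" using cd by (auto simp: le_less)
  define \<epsilon> where "\<epsilon> = (k d - k c) / (2 * (d - c))"
  have \<epsilon>: "\<epsilon> > 0" using gt cd' by (simp add: \<epsilon>_def)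
  \<comment> \<open>\<open>g\<close> still increases from \<open>c\<close> to \<open>d\<close>, and by Lusin's property some value \<open>y\<close> in between is
     not attained on \<open>N\<close>; at the last point \<open>t\<close> with \<open>g t = y\<close> the Dini bound for \<open>k\<close> is violated\<close>
  define g where "g s = k s - (\<epsilon> * s + (- \<epsilon> * c))" for s
  have acg: "abs_cont_on {c..d} g" unfolding g_def by (rule abs_cont_on_diff[OF ac abs_cont_on_affine])
  have contg: "continuous_on {c..d} g" by (rule abs_cont_on_imp_continuous_on[OF acg])
  have "\<epsilon> * (d - c) = (k d - k c) / 2" using cd' by (simp add: \<epsilon>_def field_simps)
  moreover have "g d - g c = (k d - k c) - \<epsilon> * (d - c)" by (simp add: g_def algebra_simps)
  ultimately have "g d - g c = (k d - k c) / 2" by simp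
  then have "g c < g d" using gt by simp
  then have "\<not> negligible {g c<..<g d}" using negligible_interval(2)[of "g c" "g d"] by simp
  moreover have "negligible (g ` (N \<inter> {c..d}))"
    by (rule abs_cont_on_negligible_image[OF acg]) (use N negligible_Int in auto)
  ultimately obtain y where y: "y \<in> {g c<..<g d}" "y \<notin> g ` (N \<inter> {c..d})"
    using negligible_subset[of "g ` (N \<inter> {c..d})" "{g c<..<g d}"] by blast
  define S where "S = {s \<in> {c..d}. g s \<le> y}"
  have "closed S" unfolding S_def
    by (rule continuous_on_closed_Collect_le[OF contg continuous_on_const closed_atLeastAtMost])
  moreover have "c \<in> S" using y cd by (simp add: S_def)
  moreover have bS: "bdd_above S" unfolding S_def by (rule bdd_aboveI[of _ d]) auto
  ultimately have tS: "Sup S \<in> S" using closed_contains_Sup by blast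
  define t where "t = Sup S"
  have le_t: "\<And>s. s \<in> S \<Longrightarrow> s \<le> t" unfolding t_def using bS by (rule cSup_upper[rotated])
  have t: "c \<le> t" "t \<le> d" "g t \<le> y" using tS by (auto simp: S_def t_def)
  then have td: "t < d" using y by (cases "t = d") auto
  obtain x where x: "t \<le> x" "x \<le> d" "g x = y"
    using IVT'[of g t y d] t y td continuous_on_subset[OF contg, of "{t..d}"] by force
  then have "x \<in> S" using t by (simp add: S_def)
  then have gty: "g t = y" using le_t x by force
  then have "t \<notin> N" using y t by force
  then obtain \<delta> where \<delta>: "\<delta> > 0" "\<forall>s. t < s \<and> s < t + \<delta> \<and> s \<le> d \<longrightarrow> k s \<le> k t + \<epsilon> * (s - t)"
    using der[of t \<epsilon>] t td \<epsilon> by auto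
  define s where "s = min (t + \<delta>/2) d"
  have s: "t < s" "s < t + \<delta>" "s \<le> d" using \<delta> td by (auto simp: s_def)
  then have "k s \<le> k t + \<epsilon> * (s - t)" using \<delta>(2) by blast
  then have "g s \<le> g t" by (simp add: g_def algebra_simps)
  then have "s \<in> S" using s t gty by (simp add: S_def)
  then show False using le_t s by force
qed

lemma sum_integral_nonoverlapping_le:
  fixes \<psi> :: "real \<Rightarrow> real"
  assumes int: "\<psi> integrable_on {c..d}" and nn: "\<And>x. x \<in> {c..d} \<Longrightarrow> 0 \<le> \<psi> x"
    and ab: "nonoverlapping_in {c..d} n a b"
  shows "(\<Sum>i<n. integral {a i..b i} \<psi>) \<le> integral {c..d} \<psi>"
proof -
  define h where "h i x = (if x \<in> {a i<..<b i} then \<psi> x else 0)" for i x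
  have sub: "{a i<..<b i} \<inter> {c..d} = {a i<..<b i}" if "i < n" for i
    using ab that by (auto simp: nonoverlapping_in_def)
  have hint: "h i integrable_on {c..d}" "integral {c..d} (h i) = integral {a i..b i} \<psi>" if "i < n" for i
    using integrable_on_subinterval[OF int] ab that
    unfolding h_def integrable_restrict_Int integral_restrict_Int sub[OF that]
    by (auto simp: nonoverlapping_in_def integrable_on_open_interval_real integral_open_interval_real)
  have "(\<Sum>i<n. h i x) \<le> \<psi> x" if x: "x \<in> {c..d}" for x
  proof (cases "\<exists>i<n. x \<in> {a i<..<b i}")
    case True
    then obtain i0 where i0: "i0 < n" "x \<in> {a i0<..<b i0}" by blast
    have "h i x = 0" if "i \<in> {..<n} - {i0}" for i
    proof -
      have "{a i<..<b i} \<inter> {a i0<..<b i0} = {}"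
        using ab that i0 unfolding nonoverlapping_in_def disjoint_family_on_def by blast
      then show ?thesis using i0 by (auto simp: h_def)
    qed
    then have "(\<Sum>i<n. h i x) = h i0 x" using i0(1) by (intro sum.remove[THEN trans]) auto
    then show ?thesis using i0 by (simp add: h_def)
  next
    case False
    then have "(\<Sum>i<n. h i x) = 0" by (intro sum.neutral) (auto simp: h_def)
    then show ?thesis using nn[OF x] by simp
  qed
  then have "integral {c..d} (\<lambda>x. \<Sum>i<n. h i x) \<le> integral {c..d} \<psi>"
    using hint(1) by (intro integral_le integrable_sum int) auto
  moreover have "(\<Sum>i<n. integral {a i..b i} \<psi>) = (\<Sum>i<n. integral {c..d} (h i))"
    using hint(2) by simp
  moreover have "\<dots> = integral {c..d} (\<lambda>x. \<Sum>i<n. h i x)"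
    by (rule integral_sum[symmetric]) (use hint(1) in auto)
  ultimately show ?thesis by simp
qed

lemma integral_truncation_small:
  fixes \<phi> :: "real \<Rightarrow> real"
  assumes int: "\<phi> integrable_on {c..d}" and nn: "\<And>t. t \<in> {c..d} \<Longrightarrow> 0 \<le> \<phi> t" and e: "e > 0"
  obtains K :: nat where "(\<lambda>t. min (\<phi> t) (real K)) integrable_on {c..d}"
    "integral {c..d} \<phi> - integral {c..d} (\<lambda>t. min (\<phi> t) (real K)) < e"
proof -
  define \<phi>k where "\<phi>k = (\<lambda>(k::nat) t. min (\<phi> t) (real k))"
  have kint: "\<phi>k k integrable_on {c..d}" for k
    using absolutely_integrable_min_1[OF nonnegative_absolutely_integrable_1[OF int nn]
        absolutely_integrable_on_const[of "{c..d}" "real k"]]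
    by (simp add: \<phi>k_def absolutely_integrable_on_def)
  have "\<bar>integral {c..d} (\<phi>k k)\<bar> \<le> integral {c..d} \<phi>" for k
    using integral_nonneg[OF kint, of k] integral_le[OF kint int, of k] nn by (auto simp: \<phi>k_def)
  then have "((\<lambda>k. integral {c..d} (\<phi>k k)) \<longlongrightarrow> integral {c..d} \<phi>) sequentially"
  proof (intro monotone_convergence_increasing[OF kint, THEN conjunct2])
    show "((\<lambda>k. \<phi>k k x) \<longlongrightarrow> \<phi> x) sequentially" for x
    proof (rule tendsto_eventually)
      obtain K :: nat where "\<phi> x \<le> real K" using real_arch_simple by blast
      then show "\<forall>\<^sub>F k in sequentially. \<phi>k k x = \<phi> x"
        unfolding eventually_sequentially by (intro exI[of _ K]) (auto simp: \<phi>k_def)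
    qed
  qed (auto simp: \<phi>k_def bounded_iff)
  then obtain K where "\<bar>integral {c..d} (\<phi>k K) - integral {c..d} \<phi>\<bar> < e"
    using e unfolding LIMSEQ_def dist_real_def by blast
  then show ?thesis using that[of K] kint[of K] by (auto simp: \<phi>k_def abs_less_iff)
qed

lemma abs_cont_on_integral:
  fixes \<phi> :: "real \<Rightarrow> real"
  assumes int: "\<phi> integrable_on {c..d}" and nn: "\<And>t. t \<in> {c..d} \<Longrightarrow> 0 \<le> \<phi> t"
  shows "abs_cont_on {c..d} (\<lambda>t. integral {c..t} \<phi>)"
proof (rule abs_cont_onI)
  fix e :: real assume e: "e > 0"
  then have e2: "e/2 > 0" by simp
  \<comment> \<open>split \<open>\<phi>\<close> into a part bounded by \<open>K\<close> and a remainder of total integral \<open>< e/2\<close>\<close>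
  obtain K :: nat where kint: "(\<lambda>t. min (\<phi> t) (real K)) integrable_on {c..d}"
    and small: "integral {c..d} \<phi> - integral {c..d} (\<lambda>t. min (\<phi> t) (real K)) < e/2"
    by (rule integral_truncation_small[OF int nn e2]) blast
  define \<psi> where "\<psi> t = \<phi> t - min (\<phi> t) (real K)" for t
  have \<psi>int: "\<psi> integrable_on {c..d}" unfolding \<psi>_def by (rule integrable_diff[OF int kint])
  have \<psi>small: "integral {c..d} \<psi> < e/2"
    using small unfolding \<psi>_def integral_diff[OF int kint] .
  define \<delta> where "\<delta> = e / (2 * (real K + 1))"
  show "\<exists>\<delta>>0. \<forall>n a b. nonoverlapping_in {c..d} n a b \<and> (\<Sum>i<n. b i - a i) < \<delta> \<longrightarrow>
      (\<Sum>i<n. norm (integral {c..b i} \<phi> - integral {c..a i} \<phi>)) < e"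
  proof (intro exI[of _ \<delta>] conjI allI impI)
    fix n a b assume H: "nonoverlapping_in {c..d} n a b \<and> (\<Sum>i<n. b i - a i) < \<delta>"
    have step: "norm (integral {c..b i} \<phi> - integral {c..a i} \<phi>) \<le> real K * (b i - a i) + integral {a i..b i} \<psi>"
      if i: "i < n" for i
    proof -
      have ai: "c \<le> a i" "a i \<le> b i" "b i \<le> d" using H i by (auto simp: nonoverlapping_in_def)
      have "integral {c..a i} \<phi> + integral {a i..b i} \<phi> = integral {c..b i} \<phi>"
        using ai integrable_on_subinterval[OF int, of c "b i"]
        by (intro Henstock_Kurzweil_Integration.integral_combine) auto
      moreover have "0 \<le> integral {a i..b i} \<phi>"
        using ai nn integrable_on_subinterval[OF int, of "a i" "b i"] by (intro integral_nonneg) auto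
      ultimately have "norm (integral {c..b i} \<phi> - integral {c..a i} \<phi>) = integral {a i..b i} \<phi>"
        by (metis add_diff_cancel_left' real_norm_def abs_of_nonneg)
      moreover have "integral {a i..b i} (\<lambda>t. min (\<phi> t) (real K)) \<le> integral {a i..b i} (\<lambda>t. real K)"
        using ai integrable_on_subinterval[OF kint, of "a i" "b i"] by (intro integral_le) auto
      then have "integral {a i..b i} (\<lambda>t. min (\<phi> t) (real K)) \<le> real K * (b i - a i)"
        using ai by (simp add: mult.commute)
      moreover have "integral {a i..b i} \<psi> = integral {a i..b i} \<phi> - integral {a i..b i} (\<lambda>t. min (\<phi> t) (real K))"
        unfolding \<psi>_def using ai integrable_on_subinterval[OF int, of "a i" "b i"]
          integrable_on_subinterval[OF kint, of "a i" "b i"] by (intro integral_diff) auto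
      ultimately show ?thesis by linarith
    qed
    have "(\<Sum>i<n. norm (integral {c..b i} \<phi> - integral {c..a i} \<phi>))
        \<le> (\<Sum>i<n. real K * (b i - a i) + integral {a i..b i} \<psi>)"
      by (rule sum_mono) (use step in auto)
    also have "\<dots> = real K * (\<Sum>i<n. b i - a i) + (\<Sum>i<n. integral {a i..b i} \<psi>)"
      by (simp add: sum.distrib sum_distrib_left)
    also have "\<dots> \<le> real K * \<delta> + integral {c..d} \<psi>"
      using H sum_integral_nonoverlapping_le[OF \<psi>int _, of n a b] by (intro add_mono mult_left_mono) (auto simp: \<psi>_def)
    also have "\<dots> < e/2 + e/2"
    proof (rule add_le_less_mono)
      have "real K * \<delta> = e/2 * (real K / (real K + 1))" by (simp add: \<delta>_def field_simps)
      also have "\<dots> \<le> e/2" using e by (intro mult_left_le) auto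
      finally show "real K * \<delta> \<le> e/2" .
    qed (rule \<psi>small)
    finally show "(\<Sum>i<n. norm (integral {c..b i} \<phi> - integral {c..a i} \<phi>)) < e" by simp
  qed (use e in \<open>simp add: \<delta>_def\<close>)
qed

lemma integral_right_Lebesgue_points:
  fixes \<phi> :: "real \<Rightarrow> real"
  assumes int: "\<phi> integrable_on {c..d}"
  obtains N where "negligible N" "\<And>t e. t \<in> {c..<d} \<Longrightarrow> t \<notin> N \<Longrightarrow> e > 0 \<Longrightarrow>
      \<exists>\<delta>>0. \<forall>h. 0 < h \<and> h < \<delta> \<and> t + h \<le> d \<longrightarrow> \<bar>integral {t..t+h} \<phi> - h * \<phi> t\<bar> \<le> e * h"
proof -
  define \<phi>' where "\<phi>' = (\<lambda>x. if x \<in> {c..d} then \<phi> x else 0)"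
  have "\<phi>' integrable_on UNIV" unfolding \<phi>'_def by (rule integrable_restrict_UNIV[THEN iffD2, OF int])
  then have "\<phi>' integrable_on cbox a b" for a b by (rule integrable_on_subcbox) simp
  then obtain N where N: "negligible N"
    "\<And>x e. \<lbrakk>x \<notin> N; 0 < e\<rbrakk> \<Longrightarrow> \<exists>d>0. \<forall>h. 0 < h \<and> h < d \<longrightarrow>
        norm (integral (cbox x (x + h *\<^sub>R One)) \<phi>' /\<^sub>R h ^ DIM(real) - \<phi>' x) < e"
    using integrable_ccontinuous_explicit by blast
  have "\<exists>\<delta>>0. \<forall>h. 0 < h \<and> h < \<delta> \<and> t + h \<le> d \<longrightarrow> \<bar>integral {t..t+h} \<phi> - h * \<phi> t\<bar> \<le> e * h"
    if t: "t \<in> {c..<d}" "t \<notin> N" and e: "e > 0" for t e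
  proof -
    obtain \<delta> where \<delta>: "\<delta> > 0" "\<forall>h. 0 < h \<and> h < \<delta> \<longrightarrow>
        norm (integral (cbox t (t + h *\<^sub>R One)) \<phi>' /\<^sub>R h ^ DIM(real) - \<phi>' t) < e"
      using N(2)[OF t(2) e] by blast
    show ?thesis
    proof (intro exI[of _ \<delta>] conjI allI impI)
      fix h :: real assume h: "0 < h \<and> h < \<delta> \<and> t + h \<le> d"
      have "integral {t..t+h} \<phi>' = integral {t..t+h} \<phi>" "\<phi>' t = \<phi> t"
        using t h integral_restrict_Int[of "{t..t+h}" "{c..d}" \<phi>]
        by (auto simp: \<phi>'_def Int_absorb1)
      then have "\<bar>integral {t..t+h} \<phi> / h - \<phi> t\<bar> < e"
        using \<delta>(2)[rule_format, of h] h by (simp add: cbox_interval divide_inverse mult.commute)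
      moreover have "integral {t..t+h} \<phi> / h - \<phi> t = (integral {t..t+h} \<phi> - h * \<phi> t) / h"
        using h by (simp add: field_simps)
      then have "\<bar>integral {t..t+h} \<phi> - h * \<phi> t\<bar> / h = \<bar>integral {t..t+h} \<phi> / h - \<phi> t\<bar>"
        using h by (simp add: abs_divide)
      ultimately have "\<bar>integral {t..t+h} \<phi> - h * \<phi> t\<bar> / h < e" by simp
      then show "\<bar>integral {t..t+h} \<phi> - h * \<phi> t\<bar> \<le> e * h" using h by (simp add: pos_divide_less_eq)
    qed (rule \<delta>(1))
  qed
  then show ?thesis using that N(1) by blast
qed

lemma abs_cont_on_diff_le_integral:
  fixes f \<phi> :: "real \<Rightarrow> real"
  assumes ac: "abs_cont_on {c..d} f" and cd: "c \<le> d" and int: "\<phi> integrable_on {c..d}"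
    and nn: "\<And>t. t \<in> {c..d} \<Longrightarrow> 0 \<le> \<phi> t" and N: "negligible N"
    and der: "\<And>t. t \<in> {c..<d} \<Longrightarrow> t \<notin> N \<Longrightarrow>
        \<exists>D. (f has_real_derivative D) (at t within {c..d}) \<and> D \<le> \<phi> t"
  shows "f d - f c \<le> integral {c..d} \<phi>"
proof -
  define G where "G t = integral {c..t} \<phi>" for t
  obtain N2 where N2: "negligible N2" "\<And>t e. t \<in> {c..<d} \<Longrightarrow> t \<notin> N2 \<Longrightarrow> e > 0 \<Longrightarrow>
      \<exists>\<delta>>0. \<forall>h. 0 < h \<and> h < \<delta> \<and> t + h \<le> d \<longrightarrow> \<bar>integral {t..t+h} \<phi> - h * \<phi> t\<bar> \<le> e * h"
    by (rule integral_right_Lebesgue_points[OF int]) blast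
  have ack: "abs_cont_on {c..d} (\<lambda>t. f t - G t)"
    unfolding G_def by (rule abs_cont_on_diff[OF ac abs_cont_on_integral[OF int nn]])
  have "f d - G d \<le> f c - G c"
  proof (rule abs_cont_on_le_if_upper_right_deriv_nonpos[OF ack cd, of "N \<union> N2"])
    show "negligible (N \<union> N2)" using N N2(1) by simp
    fix t e :: real assume t: "t \<in> {c..<d}" "t \<notin> N \<union> N2" and e: "e > 0"
    obtain D where D: "(f has_real_derivative D) (at t within {c..d})" "D \<le> \<phi> t" using der t by blast
    then have "\<forall>\<^sub>F y in at t within {c..d}. dist ((f y - f t) / (y - t)) D < e/2"
      using e by (intro tendstoD) (auto simp: has_field_derivative_iff)
    then obtain \<delta>1 where \<delta>1: "\<delta>1 > 0" "\<And>y. y \<in> {c..d} \<Longrightarrow> y \<noteq> t \<Longrightarrow> dist y t < \<delta>1 \<Longrightarrow>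
        dist ((f y - f t) / (y - t)) D < e/2"
      unfolding eventually_at by blast
    obtain \<delta>2 where \<delta>2: "\<delta>2 > 0" "\<forall>h. 0 < h \<and> h < \<delta>2 \<and> t + h \<le> d \<longrightarrow> \<bar>integral {t..t+h} \<phi> - h * \<phi> t\<bar> \<le> e/2 * h"
      using N2(2)[of t "e/2"] t e by auto
    show "\<exists>\<delta>>0. \<forall>s. t < s \<and> s < t + \<delta> \<and> s \<le> d \<longrightarrow> f s - G s \<le> f t - G t + e * (s - t)"
    proof (intro exI[of _ "min \<delta>1 \<delta>2"] conjI allI impI)
      fix s assume s: "t < s \<and> s < t + min \<delta>1 \<delta>2 \<and> s \<le> d"
      have "\<bar>(f s - f t) / (s - t) - D\<bar> < e/2"
        using \<delta>1(2)[of s] s t by (auto simp: dist_real_def)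
      then have "(f s - f t) / (s - t) < D + e/2" by linarith
      then have "f s - f t \<le> (D + e/2) * (s - t)" using s by (simp add: pos_divide_less_eq less_imp_le)
      also have "\<dots> \<le> (\<phi> t + e/2) * (s - t)" using D(2) s by (intro mult_right_mono) auto
      finally have fs: "f s - f t \<le> (\<phi> t + e/2) * (s - t)" .
      have "0 < s - t \<and> s - t < \<delta>2 \<and> t + (s - t) \<le> d" using s by auto
      then have "\<bar>integral {t..t + (s - t)} \<phi> - (s - t) * \<phi> t\<bar> \<le> e/2 * (s - t)" using \<delta>2(2) by blast
      then have "\<bar>integral {t..s} \<phi> - (s - t) * \<phi> t\<bar> \<le> e/2 * (s - t)" by simp
      then have "integral {t..s} \<phi> \<ge> (s - t) * \<phi> t - e/2 * (s - t)" by linarith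
      moreover have "G t + integral {t..s} \<phi> = G s" unfolding G_def
        using t s integrable_on_subinterval[OF int, of c s]
        by (intro Henstock_Kurzweil_Integration.integral_combine) auto
      moreover have "(\<phi> t + e/2) * (s - t) = (s - t) * \<phi> t - e/2 * (s - t) + e * (s - t)"
        by (simp add: algebra_simps)
      ultimately show "f s - G s \<le> f t - G t + e * (s - t)" using fs by linarith
    qed (use \<delta>1 \<delta>2 in auto)
  qed
  then show ?thesis by (simp add: G_def)
qed

lemma abs_cont_deriv_zero_imp_const:
  fixes f :: "real \<Rightarrow> real"
  assumes ac: "\<And>a b. abs_cont_on {a..b} f" and N: "negligible N"
    and der: "\<And>t. t \<notin> N \<Longrightarrow> (f has_real_derivative 0) (at t)"
  shows "f t = f s"
proof -
  have le: "f y - f x \<le> 0" if "x \<le> y" "\<And>a b. abs_cont_on {a..b} f"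
      "\<And>t. t \<notin> N \<Longrightarrow> (f has_real_derivative 0) (at t)" for x y :: real and f :: "real \<Rightarrow> real"
  proof -
    have "f y - f x \<le> integral {x..y} (\<lambda>_. 0)"
    proof (rule abs_cont_on_diff_le_integral[OF that(2) that(1) _ _ N])
      fix t assume "t \<in> {x..<y}" "t \<notin> N"
      then show "\<exists>D. (f has_real_derivative D) (at t within {x..y}) \<and> D \<le> 0"
        using that(3) has_field_derivative_at_within by blast
    qed auto
    then show ?thesis by simp
  qed
  have der': "((\<lambda>t. - f t) has_real_derivative 0) (at t)" if "t \<notin> N" for t
    using DERIV_minus[OF der[OF that]] by simp
  have ac': "abs_cont_on {a..b} (\<lambda>t. - f t)" for a b
    by (rule abs_cont_on_bounded_linear[OF ac bounded_linear_minus[OF bounded_linear_ident]])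
  have "f y = f x" if "x \<le> y" for x y
    using le[OF that ac der] le[OF that ac' der'] by simp
  then show ?thesis by (metis nle_le)
qed

lemma has_vector_derivative_fst:
  "(f has_vector_derivative D) F \<Longrightarrow> ((\<lambda>x. fst (f x)) has_vector_derivative fst D) F"
  unfolding has_vector_derivative_def by (drule has_derivative_fst) simp

lemma has_vector_derivative_snd:
  "(f has_vector_derivative D) F \<Longrightarrow> ((\<lambda>x. snd (f x)) has_vector_derivative snd D) F"
  unfolding has_vector_derivative_def by (drule has_derivative_snd) simp

lemma null_sets_lborel_imp_negligible: "N \<in> null_sets lborel \<Longrightarrow> negligible N"
  unfolding negligible_iff_null_sets by (rule null_sets_completionI)

lemma AE_lborel_imp_negligible:
  assumes "AE t in lborel. P t" obtains N where "negligible N" "\<And>t. t \<notin> N \<Longrightarrow> P t"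
proof -
  obtain N where N: "\<And>t. t \<in> space lborel - N \<Longrightarrow> P t" "N \<in> null_sets lborel"
    by (rule AE_E3[OF assms]) blast
  show ?thesis by (rule that[OF null_sets_lborel_imp_negligible[OF N(2)]]) (use N(1) in auto)
qed

lemma null_sets_lborel_vimage_affine:
  fixes c t :: real
  assumes N: "N \<in> null_sets lborel" and c: "c \<noteq> 0"
  shows "(\<lambda>x. t + c * x) -` N \<in> null_sets lborel"
proof -
  have [measurable]: "N \<in> sets borel" using null_setsD2[OF N] by simp
  have "AE x in lborel. x \<notin> N" using N by (rule AE_not_in)
  then have "AE x in lborel. t + c * x \<notin> N" using c AE_borel_affine[of c "\<lambda>y. y \<notin> N" t] by simp
  moreover have "(\<lambda>x. t + c * x) \<in> borel_measurable lborel" by measurable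
  then have "(\<lambda>x. t + c * x) -` N \<inter> space lborel \<in> sets lborel" by (rule measurable_sets) simp
  ultimately show ?thesis by (subst AE_iff_null_sets) auto
qed

section \<open>Extremals with \<open>\<phi>\<^sub>3 = \<phi>\<^sub>4 = 0\<close>\<close>

abbreviation q1 :: "pt4 \<Rightarrow> real" where "q1 p \<equiv> fst p"

abbreviation q2 :: "pt4 \<Rightarrow> real" where "q2 p \<equiv> fst (snd p)"

abbreviation q3 :: "pt4 \<Rightarrow> real" where "q3 p \<equiv> fst (snd (snd p))"

abbreviation q4 :: "pt4 \<Rightarrow> real" where "q4 p \<equiv> snd (snd (snd p))"

lemma ctrl_field_eq: "ctrl_field p w =
  (fst w, snd w, (q1 p * snd w - q2 p * fst w) / 2, - (q3 p + q1 p * q2 p / 6) * fst w / 2 + (q1 p)^2 * snd w / 12)"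
  by (cases p, cases w) (simp add: ctrl_field_def)

lemma adj_field_eq: "adj_field p w \<psi> =
  (q4 \<psi> * q2 p * fst w / 12 - (q3 \<psi> / 2 + q4 \<psi> * q1 p / 6) * snd w,
   (q3 \<psi> / 2 + q4 \<psi> * q1 p / 12) * fst w, q4 \<psi> * fst w / 2, 0)"
  by (cases p, cases w, cases \<psi>) (simp add: adj_field_def)

lemma hvec_eq: "hvec p \<psi> =
  (q1 \<psi> - q3 \<psi> * q2 p / 2 - q4 \<psi> * q1 p * q2 p / 12 - q4 \<psi> * q3 p / 2, q2 \<psi> + q3 \<psi> * q1 p / 2 + q4 \<psi> * (q1 p)^2 / 12)"
  by (cases p, cases \<psi>) (simp add: hvec_def)

lemma ctrl_field_scaleR: "ctrl_field p (c *\<^sub>R w) = c *\<^sub>R ctrl_field p w"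
  by (simp add: ctrl_field_eq field_simps)

lemma has_vector_derivative_q:
  assumes "(f has_vector_derivative D) F"
  shows "((\<lambda>x. q1 (f x)) has_real_derivative q1 D) F" "((\<lambda>x. q2 (f x)) has_real_derivative q2 D) F"
    "((\<lambda>x. q3 (f x)) has_real_derivative q3 D) F" "((\<lambda>x. q4 (f x)) has_real_derivative q4 D) F"
  unfolding has_real_derivative_iff_has_vector_derivative
  by (intro assms has_vector_derivative_fst has_vector_derivative_snd)+

lemma abs_cont_on_q:
  assumes "abs_cont_on S f"
  shows "abs_cont_on S (\<lambda>x. q1 (f x))" "abs_cont_on S (\<lambda>x. q2 (f x))"
    "abs_cont_on S (\<lambda>x. q3 (f x))" "abs_cont_on S (\<lambda>x. q4 (f x))"
  by (intro abs_cont_on_bounded_linear[OF assms] bounded_linear_compose[OF bounded_linear_fst]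
      bounded_linear_compose[OF bounded_linear_snd] bounded_linear_fst bounded_linear_snd)+

definition xy_functional :: "real \<times> real \<Rightarrow> pt4 \<Rightarrow> real" where
  "xy_functional h p = fst h * q1 p + snd h * q2 p"

lemma abs_cont_on_xy_functional: "abs_cont_on S \<gamma> \<Longrightarrow> abs_cont_on S (\<lambda>t. xy_functional h (\<gamma> t))"
  unfolding xy_functional_def
  by (intro abs_cont_on_add abs_cont_on_bounded_linear[OF abs_cont_on_q(1)] abs_cont_on_bounded_linear[OF abs_cont_on_q(2)]
      bounded_linear_mult_right)

lemma has_real_derivative_xy_functional:
  assumes "(\<gamma> has_vector_derivative ctrl_field (\<gamma> t) w) (at t within S)"
  shows "((\<lambda>s. xy_functional h (\<gamma> s)) has_real_derivative inner h w) (at t within S)"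
proof -
  have "((\<lambda>s. fst h * q1 (\<gamma> s) + snd h * q2 (\<gamma> s)) has_real_derivative
      fst h * q1 (ctrl_field (\<gamma> t) w) + snd h * q2 (ctrl_field (\<gamma> t) w)) (at t within S)"
    by (intro DERIV_add DERIV_cmult has_vector_derivative_q(1,2)[OF assms])
  then show ?thesis by (simp add: xy_functional_def inner_prod_real ctrl_field_eq)
qed

lemma length_ge_xy_functional_increment:
  assumes n: "is_norm F" and hc: "FU F h = 1" and adm: "admissible T \<gamma> w"
    and int: "(\<lambda>t. F (w t)) absolutely_integrable_on {0..T}"
  shows "\<bar>xy_functional h (\<gamma> T) - xy_functional h (\<gamma> 0)\<bar> \<le> integral {0..T} (\<lambda>t. F (w t))"
proof -
  have T: "0 \<le> T" and ac: "abs_cont_on {0..T} \<gamma>"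
    and ae: "AE t in lborel. t \<in> {0..T} \<longrightarrow> (\<gamma> has_vector_derivative ctrl_field (\<gamma> t) (w t)) (at t within {0..T})"
    using adm unfolding admissible_def by auto
  obtain N where N: "negligible N"
    "\<And>t. t \<notin> N \<Longrightarrow> t \<in> {0..T} \<longrightarrow> (\<gamma> has_vector_derivative ctrl_field (\<gamma> t) (w t)) (at t within {0..T})"
    by (rule AE_lborel_imp_negligible[OF ae]) blast
  have iF: "(\<lambda>t. F (w t)) integrable_on {0..T}" using int by (simp add: absolutely_integrable_on_def)
  have nn: "\<And>t. t \<in> {0..T} \<Longrightarrow> 0 \<le> F (w t)" using is_norm_nonneg[OF n] by blast
  have le: "inner h (w t) \<le> F (w t)" "- inner h (w t) \<le> F (w t)" for t
    using abs_inner_le_FU_mult[OF n, of h "w t"] hc by simp_all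
  have D: "((\<lambda>t. xy_functional h (\<gamma> t)) has_real_derivative inner h (w t)) (at t within {0..T})"
    if "t \<in> {0..<T}" "t \<notin> N" for t
    using N(2)[of t] that by (intro has_real_derivative_xy_functional) auto
  have "xy_functional h (\<gamma> T) - xy_functional h (\<gamma> 0) \<le> integral {0..T} (\<lambda>t. F (w t))"
  proof (rule abs_cont_on_diff_le_integral[OF abs_cont_on_xy_functional[OF ac] T iF nn N(1)])
    fix t assume t: "t \<in> {0..<T}" "t \<notin> N"
    show "\<exists>D. ((\<lambda>t. xy_functional h (\<gamma> t)) has_real_derivative D) (at t within {0..T}) \<and> D \<le> F (w t)"
      using D[OF t] le(1)[of t] by blast
  qed
  moreover have "- xy_functional h (\<gamma> T) - - xy_functional h (\<gamma> 0) \<le> integral {0..T} (\<lambda>t. F (w t))"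
  proof (rule abs_cont_on_diff_le_integral[OF abs_cont_on_bounded_linear[OF abs_cont_on_xy_functional[OF ac]
        bounded_linear_minus[OF bounded_linear_ident]] T iF nn N(1)])
    fix t assume t: "t \<in> {0..<T}" "t \<notin> N"
    show "\<exists>D. ((\<lambda>t. - xy_functional h (\<gamma> t)) has_real_derivative D) (at t within {0..T}) \<and> D \<le> F (w t)"
      using DERIV_minus[OF D[OF t]] le(2)[of t] by blast
  qed
  ultimately show ?thesis by linarith
qed

lemma angle_const_if_polar_point_const:
  fixes \<theta> :: "real \<Rightarrow> real"
  assumes n: "is_norm F" and cont: "continuous_on UNIV \<theta>"
    and h: "\<And>t. rpol F (\<theta> t) *\<^sub>R dir (\<theta> t) = h"
  shows "\<theta> t = \<theta> 0"
proof -
  have "rpol F (\<theta> s) = norm h" for s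
    using h[of s] rpol_pos[OF n, of "\<theta> s"] by auto
  then have "dir (\<theta> s) = dir (\<theta> 0)" for s
    using h[of s] h[of 0] rpol_pos[OF n] by (metis less_irrefl scaleR_cancel_left)
  then have cs: "cos (\<theta> s) = cos (\<theta> 0) \<and> sin (\<theta> s) = sin (\<theta> 0)" for s by (simp add: dir_def)
  have "cos (\<theta> s - \<theta> 0) = 1" for s using cs[of s] by (simp add: cos_diff sin_cos_squared_add3)
  then have int: "(\<theta> s - \<theta> 0) / (2 * pi) \<in> \<int>" for s
    by (metis cos_one_2pi_int nonzero_mult_div_cancel_right mult.assoc pi_neq_zero
        mult_eq_0_iff zero_neq_numeral Ints_of_int)
  define k where "k s = (\<theta> s - \<theta> 0) / (2 * pi)" for s
  have "k constant_on UNIV"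
  proof (rule continuous_discrete_range_constant)
    show "continuous_on UNIV k" unfolding k_def[abs_def] by (intro continuous_intros cont) simp
    show "\<exists>e>0. \<forall>y. y \<in> UNIV \<and> k y \<noteq> k x \<longrightarrow> e \<le> norm (k y - k x)" for x
      using Ints_nonzero_abs_ge1[OF Ints_diff[OF int int]] by (intro exI[of _ 1]) (auto simp: k_def)
  qed (rule connected_UNIV)
  then have "k t = k 0" unfolding constant_on_def by (metis UNIV_I)
  then show ?thesis by (simp add: k_def)
qed

definition horizontal_line :: "real \<times> real \<Rightarrow> real \<Rightarrow> pt4" where
  "horizontal_line w t = (fst w * t, snd w * t, 0, 0)"

locale straight_extremal =
  fixes F :: "real \<times> real \<Rightarrow> real" and g :: "real \<Rightarrow> pt4" and u :: "real \<Rightarrow> real \<times> real" and \<psi> :: "real \<Rightarrow> pt4"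
  assumes norm: "is_norm F" and normal: "normal_ext F g u \<psi>"
    and \<psi>3: "q3 (\<psi> 0) = 0" and \<psi>4: "q4 (\<psi> 0) = 0"
begin

definition h :: "real \<times> real" where "h = (q1 (\<psi> 0), q2 (\<psi> 0))"

lemma g0: "g 0 = (0, 0, 0, 0)" and u_measurable: "u \<in> borel_measurable lborel"
  and F_u_le: "F (u t) \<le> 1" and abs_cont_g: "abs_cont_on {a..b} g" and abs_cont_\<psi>: "abs_cont_on {a..b} \<psi>"
  using normal unfolding normal_ext_def by blast+

lemma AE_extremal:
  obtains N where "N \<in> null_sets lborel"
    "\<And>t. t \<notin> N \<Longrightarrow> (g has_vector_derivative ctrl_field (g t) (u t)) (at t)"
    "\<And>t. t \<notin> N \<Longrightarrow> (\<psi> has_vector_derivative adj_field (g t) (u t) (\<psi> t)) (at t)"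
    "\<And>t. t \<notin> N \<Longrightarrow> inner (hvec (g t) (\<psi> t)) (u t) = 1"
    "\<And>t. t \<notin> N \<Longrightarrow> FU F (hvec (g t) (\<psi> t)) = 1"
proof -
  have "AE t in lborel. (g has_vector_derivative ctrl_field (g t) (u t)) (at t) \<and>
      (\<psi> has_vector_derivative adj_field (g t) (u t) (\<psi> t)) (at t) \<and>
      inner (hvec (g t) (\<psi> t)) (u t) = 1 \<and> FU F (hvec (g t) (\<psi> t)) = 1"
    using normal unfolding normal_ext_def inner_prod_real by (intro AE_conjI) auto
  then obtain N where "\<And>t. t \<in> space lborel - N \<Longrightarrow> (g has_vector_derivative ctrl_field (g t) (u t)) (at t) \<and>
      (\<psi> has_vector_derivative adj_field (g t) (u t) (\<psi> t)) (at t) \<and>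
      inner (hvec (g t) (\<psi> t)) (u t) = 1 \<and> FU F (hvec (g t) (\<psi> t)) = 1" "N \<in> null_sets lborel"
    by (rule AE_E3) blast
  then show ?thesis using that by simp
qed

lemma covector_const: "\<psi> t = (q1 (\<psi> 0), q2 (\<psi> 0), 0, 0)"
proof -
  obtain N where N: "N \<in> null_sets lborel"
    "\<And>t. t \<notin> N \<Longrightarrow> (\<psi> has_vector_derivative adj_field (g t) (u t) (\<psi> t)) (at t)"
    by (rule AE_extremal) blast
  note negl = null_sets_lborel_imp_negligible[OF N(1)]
  note const = abs_cont_deriv_zero_imp_const[OF abs_cont_on_q(1)[OF abs_cont_\<psi>] negl]
    abs_cont_deriv_zero_imp_const[OF abs_cont_on_q(2)[OF abs_cont_\<psi>] negl]
    abs_cont_deriv_zero_imp_const[OF abs_cont_on_q(3)[OF abs_cont_\<psi>] negl]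
    abs_cont_deriv_zero_imp_const[OF abs_cont_on_q(4)[OF abs_cont_\<psi>] negl]
  note deriv = has_vector_derivative_q[OF N(2)]
  have z4: "q4 (\<psi> s) = 0" for s
    using const(4)[of s 0] deriv(4) \<psi>4 by (simp add: adj_field_eq)
  \<comment> \<open>the adjoint system is triangular: \<open>\<psi>\<^sub>4 \<equiv> 0\<close> forces \<open>\<psi>\<^sub>3\<close> constant, and then \<open>\<psi>\<^sub>1, \<psi>\<^sub>2\<close>\<close>
  have z3: "q3 (\<psi> s) = 0" for s
    using const(3)[of s 0] deriv(3) \<psi>3 z4 by (simp add: adj_field_eq)
  have "q1 (\<psi> t) = q1 (\<psi> 0)" "q2 (\<psi> t) = q2 (\<psi> 0)"
    using const(1,2) deriv(1,2) z3 z4 by (simp_all add: adj_field_eq)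
  then show ?thesis using z3[of t] z4[of t] by (simp add: prod_eq_iff)
qed

lemma hvec_const: "hvec (g t) (\<psi> t) = h"
  using covector_const[of t] by (simp add: hvec_eq h_def)

lemma AE_control:
  obtains N where "N \<in> null_sets lborel"
    "\<And>t. t \<notin> N \<Longrightarrow> (g has_vector_derivative ctrl_field (g t) (u t)) (at t)"
    "\<And>t. t \<notin> N \<Longrightarrow> u t \<in> exposed_face F h"
proof -
  obtain N where "N \<in> null_sets lborel"
    "\<And>t. t \<notin> N \<Longrightarrow> (g has_vector_derivative ctrl_field (g t) (u t)) (at t)"
    "\<And>t. t \<notin> N \<Longrightarrow> inner (hvec (g t) (\<psi> t)) (u t) = 1"
    by (rule AE_extremal) blast
  then show ?thesis using that F_u_le by (simp add: hvec_const exposed_face_def)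
qed

lemma FU_h: "FU F h = 1"
proof -
  obtain N where N: "N \<in> null_sets lborel" "\<And>t. t \<notin> N \<Longrightarrow> FU F (hvec (g t) (\<psi> t)) = 1"
    by (rule AE_extremal) blast
  have "N \<noteq> UNIV" using N(1) emeasure_lborel_UNIV by auto
  then obtain t where "t \<notin> N" by blast
  then show ?thesis using N(2) hvec_const by simp
qed

lemma xy_functional_g: "xy_functional h (g t) = t"
proof -
  obtain N where N: "N \<in> null_sets lborel"
    "\<And>t. t \<notin> N \<Longrightarrow> (g has_vector_derivative ctrl_field (g t) (u t)) (at t)"
    "\<And>t. t \<notin> N \<Longrightarrow> u t \<in> exposed_face F h"
    by (rule AE_control) blast
  have deriv: "((\<lambda>t. xy_functional h (g t) - t) has_real_derivative 0) (at s)" if "s \<notin> N" for s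
    using has_real_derivative_xy_functional[OF N(2)[OF that], of h] N(3)[OF that]
    by (auto intro!: derivative_eq_intros simp: exposed_face_def)
  have "xy_functional h (g t) - t = xy_functional h (g 0) - 0"
    by (rule abs_cont_deriv_zero_imp_const[OF abs_cont_on_diff[OF abs_cont_on_xy_functional[OF abs_cont_g]
        abs_cont_on_ident] null_sets_lborel_imp_negligible[OF N(1)] deriv])
  then show ?thesis using g0 by (simp add: xy_functional_def)
qed

lemma eq_horizontal_line_if_exposed_face_singleton:
  assumes face: "exposed_face F h = {w}"
  shows "g = horizontal_line w"
proof -
  obtain N where N: "N \<in> null_sets lborel"
    "\<And>t. t \<notin> N \<Longrightarrow> (g has_vector_derivative ctrl_field (g t) (u t)) (at t)"
    "\<And>t. t \<notin> N \<Longrightarrow> u t \<in> exposed_face F h"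
    by (rule AE_control) blast
  then have N2: "\<And>t. t \<notin> N \<Longrightarrow> (g has_vector_derivative ctrl_field (g t) w) (at t)"
    using face by (metis singletonD)
  note negl = null_sets_lborel_imp_negligible[OF N(1)]
  note deriv = has_vector_derivative_q[OF N2]
  have xy: "q1 (g t) = fst w * t" "q2 (g t) = snd w * t" for t
  proof -
    have "q1 (g t) - (fst w * t + 0) = q1 (g 0) - (fst w * 0 + 0)"
      using deriv(1)
      by (intro abs_cont_deriv_zero_imp_const[OF abs_cont_on_diff[OF abs_cont_on_q(1)[OF abs_cont_g]
          abs_cont_on_affine] negl]) (auto intro!: derivative_eq_intros simp: ctrl_field_eq)
    moreover have "q2 (g t) - (snd w * t + 0) = q2 (g 0) - (snd w * 0 + 0)"
      using deriv(2)
      by (intro abs_cont_deriv_zero_imp_const[OF abs_cont_on_diff[OF abs_cont_on_q(2)[OF abs_cont_g]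
          abs_cont_on_affine] negl]) (auto intro!: derivative_eq_intros simp: ctrl_field_eq)
    ultimately show "q1 (g t) = fst w * t" "q2 (g t) = snd w * t" using g0 by simp_all
  qed
  have z: "q3 (g t) = 0" for t
    using abs_cont_deriv_zero_imp_const[OF abs_cont_on_q(3)[OF abs_cont_g] negl, of t 0] deriv(3) g0
    by (simp add: ctrl_field_eq xy algebra_simps)
  have "q4 (g t) = 0" for t
    using abs_cont_deriv_zero_imp_const[OF abs_cont_on_q(4)[OF abs_cont_g] negl, of t 0] deriv(4) g0
    by (simp add: ctrl_field_eq xy z algebra_simps power2_eq_square)
  then show ?thesis using xy z by (simp add: fun_eq_iff horizontal_line_def prod_eq_iff)
qed

lemma segment_admissible:
  obtains T \<gamma> w where "admissible T \<gamma> w" "(\<lambda>\<tau>. F (w \<tau>)) absolutely_integrable_on {0..T}"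
    "\<gamma> 0 = g s" "\<gamma> T = g t" "integral {0..T} (\<lambda>\<tau>. F (w \<tau>)) = \<bar>t - s\<bar>"
proof -
  obtain N where N: "N \<in> null_sets lborel"
    "\<And>t. t \<notin> N \<Longrightarrow> (g has_vector_derivative ctrl_field (g t) (u t)) (at t)"
    "\<And>t. t \<notin> N \<Longrightarrow> u t \<in> exposed_face F h"
    by (rule AE_control) blast
  define c where "c = (if s \<le> t then 1 else -1 :: real)"
  define T where "T = \<bar>t - s\<bar>"
  define \<gamma> where "\<gamma> = (\<lambda>\<tau>. g (s + c * \<tau>))"
  define w where "w = (\<lambda>\<tau>. c *\<^sub>R u (s + c * \<tau>))"
  define N' where "N' = (\<lambda>\<tau>. s + c * \<tau>) -` N"
  have c: "c \<noteq> 0" "\<bar>c\<bar> = 1" "s + c * T = t" by (auto simp: c_def T_def)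
  have N': "N' \<in> null_sets lborel" unfolding N'_def by (rule null_sets_lborel_vimage_affine[OF N(1) c(1)])
  have F1: "F (w \<tau>) = 1" if "\<tau> \<notin> N'" for \<tau>
    using norm_eq_1_if_in_exposed_face[OF norm FU_h N(3)] that c(2)
    by (simp add: N'_def w_def is_norm_scaleR[OF norm])
  have d\<gamma>: "(\<gamma> has_vector_derivative ctrl_field (\<gamma> \<tau>) (w \<tau>)) (at \<tau>)" if "\<tau> \<notin> N'" for \<tau>
  proof -
    have "((\<lambda>\<tau>. s + c * \<tau>) has_real_derivative c) (at \<tau>)" by (auto intro!: derivative_eq_intros)
    then have "((\<lambda>\<tau>. s + c * \<tau>) has_vector_derivative c) (at \<tau>)"
      by (rule has_real_derivative_iff_has_vector_derivative[THEN iffD1])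
    from vector_diff_chain_at[OF this N(2)] that show ?thesis
      by (simp add: N'_def \<gamma>_def w_def o_def ctrl_field_scaleR)
  qed
  have adm: "admissible T \<gamma> w"
    unfolding admissible_def
  proof (intro conjI)
    show "0 \<le> T" by (simp add: T_def)
    show "w \<in> borel_measurable lborel" unfolding w_def using u_measurable by measurable
    show "abs_cont_on {0..T} \<gamma>"
      unfolding \<gamma>_def using c(1) by (rule abs_cont_on_compose_affine[OF abs_cont_g[of "min s t" "max s t"]])
        (auto simp: c_def T_def)
    show "AE \<tau> in lborel. \<tau> \<in> {0..T} \<longrightarrow> (\<gamma> has_vector_derivative ctrl_field (\<gamma> \<tau>) (w \<tau>)) (at \<tau> within {0..T})"
      by (rule AE_I'[OF N']) (auto intro: has_vector_derivative_at_within d\<gamma>)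
  qed
  have "integral {0..T} (\<lambda>\<tau>. F (w \<tau>)) = integral {0..T} (\<lambda>\<tau>. 1::real)"
    using F1 by (intro integral_spike[OF null_sets_lborel_imp_negligible[OF N']]) auto
  then have length: "integral {0..T} (\<lambda>\<tau>. F (w \<tau>)) = \<bar>t - s\<bar>" by (simp add: T_def)
  have "(\<lambda>\<tau>. F (w \<tau>)) absolutely_integrable_on {0..T}"
    using F1 by (intro absolutely_integrable_spike[OF absolutely_integrable_on_const
        null_sets_lborel_imp_negligible[OF N']]) auto
  moreover have "\<gamma> 0 = g s" "\<gamma> T = g t" using c(3) by (simp_all add: \<gamma>_def)
  ultimately show ?thesis using that[OF adm _ _ _ length] by blast
qed

lemma sF_dist_eq: "sF_dist F (g s) (g t) = \<bar>s - t\<bar>"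
  unfolding sF_dist_def
proof (rule cInf_eq_minimum)
  obtain T \<gamma> w where "admissible T \<gamma> w" "(\<lambda>\<tau>. F (w \<tau>)) absolutely_integrable_on {0..T}"
    "\<gamma> 0 = g s" "\<gamma> T = g t" "integral {0..T} (\<lambda>\<tau>. F (w \<tau>)) = \<bar>t - s\<bar>"
    by (rule segment_admissible) blast
  then show "\<bar>s - t\<bar> \<in> {integral {0..T} (\<lambda>t. F (w t)) | T \<gamma> w. admissible T \<gamma> w \<and>
      (\<lambda>t. F (w t)) absolutely_integrable_on {0..T} \<and> \<gamma> 0 = g s \<and> \<gamma> T = g t}"
    unfolding mem_Collect_eq by (intro exI[of _ T] exI[of _ \<gamma>] exI[of _ w]) (simp add: abs_minus_commute)
next
  fix x assume "x \<in> {integral {0..T} (\<lambda>t. F (w t)) | T \<gamma> w. admissible T \<gamma> w \<and>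
      (\<lambda>t. F (w t)) absolutely_integrable_on {0..T} \<and> \<gamma> 0 = g s \<and> \<gamma> T = g t}"
  then obtain T \<gamma> w where x: "x = integral {0..T} (\<lambda>t. F (w t))" and adm: "admissible T \<gamma> w"
    and int: "(\<lambda>t. F (w t)) absolutely_integrable_on {0..T}" and ends: "\<gamma> 0 = g s" "\<gamma> T = g t"
    by blast
  \<comment> \<open>every competitor changes \<open>xy_functional h\<close> by \<open>t - s\<close>, which costs at least \<open>\<bar>t - s\<bar>\<close>\<close>
  have "\<bar>xy_functional h (\<gamma> T) - xy_functional h (\<gamma> 0)\<bar> \<le> x"
    unfolding x by (rule length_ge_xy_functional_increment[OF norm FU_h adm int])
  then show "\<bar>s - t\<bar> \<le> x" by (simp add: ends xy_functional_g abs_minus_commute)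
qed

end

lemma horizontal_line_in_ext_data:
  assumes n: "is_norm F" and w: "w \<in> exposed_face F (rpol F \<theta>0 *\<^sub>R dir \<theta>0)"
  shows "horizontal_line w \<in> ext_data F \<theta>0"
proof -
  define \<psi>0 :: pt4 where "\<psi>0 = (rpol F \<theta>0 * cos \<theta>0, rpol F \<theta>0 * sin \<theta>0, 0, 0)"
  define V :: pt4 where "V = (fst w, snd w, 0, 0)"
  define g where "g = (\<lambda>t::real. t *\<^sub>R V)"
  have hv: "hvec (g t) \<psi>0 = rpol F \<theta>0 *\<^sub>R dir \<theta>0" for t by (simp add: hvec_eq g_def \<psi>0_def dir_def)
  have "normal_ext F g (\<lambda>_. w) (\<lambda>_. \<psi>0)"
    unfolding normal_ext_def
  proof (intro conjI allI AE_I2)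
    show "g 0 = (0, 0, 0, 0)" by (simp add: g_def zero_prod_def)
    show "(\<lambda>_. w) \<in> borel_measurable lborel" by simp
    show "F w \<le> 1" using w by (simp add: exposed_face_def)
    show "abs_cont_on {a..b} g" for a b unfolding g_def by (rule abs_cont_on_scaleR_ident)
    show "(g has_vector_derivative ctrl_field (g t) w) (at t)" for t
    proof -
      have "ctrl_field (g t) w = V" by (simp add: ctrl_field_eq g_def V_def algebra_simps power2_eq_square)
      then show ?thesis
        using has_vector_derivative_scaleR[OF DERIV_ident has_vector_derivative_const[of V]] by (simp add: g_def)
    qed
    show "abs_cont_on {a..b} (\<lambda>_. \<psi>0)" for a b by (rule abs_cont_on_const)
    show "\<psi>0 \<noteq> 0"
    proof
      assume "\<psi>0 = 0"
      then have "cos \<theta>0 = 0" "sin \<theta>0 = 0" using rpol_pos[OF n, of \<theta>0] by (auto simp: \<psi>0_def zero_prod_def)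
      then show False using sin_cos_squared_add[of \<theta>0] by simp
    qed
    show "((\<lambda>_. \<psi>0) has_vector_derivative adj_field (g t) w \<psi>0) (at t)" for t
    proof -
      have "adj_field (g t) w \<psi>0 = 0" by (simp add: adj_field_eq \<psi>0_def zero_prod_def)
      then show ?thesis by (simp add: has_vector_derivative_const)
    qed
    show "fst (hvec (g t) \<psi>0) * fst w + snd (hvec (g t) \<psi>0) * snd w = FU F (hvec (g t) \<psi>0)" for t
      using w FU_rpol_dir[OF n] unfolding hv exposed_face_def inner_prod_real by simp
    show "FU F (hvec (g t) \<psi>0) = 1" for t using FU_rpol_dir[OF n] unfolding hv .
  qed
  moreover have "horizontal_line w = g" by (auto simp: horizontal_line_def g_def V_def)
  ultimately show ?thesis unfolding ext_data_def \<psi>0_def by blast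
qed

lemma ext_data_eq_if_exposed_face_singleton:
  assumes n: "is_norm F" and face: "exposed_face F (rpol F \<theta>0 *\<^sub>R dir \<theta>0) = {w}"
  shows "ext_data F \<theta>0 = {horizontal_line w}"
proof
  show "ext_data F \<theta>0 \<subseteq> {horizontal_line w}"
  proof
    fix g assume "g \<in> ext_data F \<theta>0"
    then obtain u \<psi> where ne: "normal_ext F g u \<psi>"
      and \<psi>0: "\<psi> 0 = (rpol F \<theta>0 * cos \<theta>0, rpol F \<theta>0 * sin \<theta>0, 0, 0)"
      unfolding ext_data_def by blast
    interpret straight_extremal F g u \<psi> using n ne \<psi>0 by unfold_locales simp_all
    have "h = rpol F \<theta>0 *\<^sub>R dir \<theta>0" by (simp add: h_def \<psi>0 dir_def)
    then show "g \<in> {horizontal_line w}" using eq_horizontal_line_if_exposed_face_singleton face by simp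
  qed
  show "{horizontal_line w} \<subseteq> ext_data F \<theta>0" using horizontal_line_in_ext_data[OF n] face by blast
qed

lemma ext_data_eq_horizontal_line_iff_differentiable:
  assumes n: "is_norm F"
  shows "(\<exists>a1 a2. ext_data F \<theta>0 = {\<lambda>t. (a1 * t, a2 * t, 0, 0)}) \<longleftrightarrow> rpol F differentiable (at \<theta>0)"
proof
  assume "rpol F differentiable (at \<theta>0)"
  then obtain r' where "(rpol F has_real_derivative r') (at \<theta>0)" by (rule real_differentiableE)
  then show "\<exists>a1 a2. ext_data F \<theta>0 = {\<lambda>t. (a1 * t, a2 * t, 0, 0)}"
    using ext_data_eq_if_exposed_face_singleton[OF n exposed_face_eq_if_has_derivative[OF n]]
    unfolding horizontal_line_def[abs_def] by blast
next
  assume "\<exists>a1 a2. ext_data F \<theta>0 = {\<lambda>t. (a1 * t, a2 * t, 0, 0)}"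
  then obtain a1 a2 where E: "ext_data F \<theta>0 = {\<lambda>t. (a1 * t, a2 * t, 0, 0)}" by blast
  have "w = (a1, a2)" if "w \<in> exposed_face F (rpol F \<theta>0 *\<^sub>R dir \<theta>0)" for w
    using horizontal_line_in_ext_data[OF n that] unfolding E horizontal_line_def
    by (simp add: fun_eq_iff) (metis mult_1_right prod.collapse)
  then have "exposed_face F (rpol F \<theta>0 *\<^sub>R dir \<theta>0) = {(a1, a2)}"
    using exposed_face_nonempty[OF n FU_rpol_dir[OF n]] by blast
  then show "rpol F differentiable (at \<theta>0)" by (rule rpol_differentiable_if_exposed_face_singleton[OF n])
qed

theorem proposition3:
  fixes F :: "real \<times> real \<Rightarrow> real"
  assumes "is_norm F"
  shows
   "(\<forall>g u \<psi> \<theta>. normal_ext F g u \<psi> \<and> fst (snd (snd (\<psi> 0))) = 0 \<and> snd (snd (snd (\<psi> 0))) = 0 \<and>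
        continuous_on UNIV \<theta> \<and>
        (\<forall>t. hvec (g t) (\<psi> t) = (rpol F (\<theta> t) * cos (\<theta> t), rpol F (\<theta> t) * sin (\<theta> t)))
      \<longrightarrow> (\<exists>\<theta>0. \<forall>t. \<theta> t = \<theta>0))
    \<and> (\<forall>\<theta>0. (\<exists>a1 a2. ext_data F \<theta>0 = {\<lambda>t. (a1 * t, a2 * t, 0, 0)})
              \<longleftrightarrow> rpol F differentiable (at \<theta>0))
    \<and> (\<forall>\<theta>0 r'. (rpol F has_real_derivative r') (at \<theta>0) \<longrightarrow>
         ext_data F \<theta>0 =
           {\<lambda>t. ((r' * sin \<theta>0 + rpol F \<theta>0 * cos \<theta>0) / (rpol F \<theta>0)^2 * t,
                  (rpol F \<theta>0 * sin \<theta>0 - r' * cos \<theta>0) / (rpol F \<theta>0)^2 * t, 0, 0)})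
    \<and> (\<forall>g u \<psi>. normal_ext F g u \<psi> \<and> fst (snd (snd (\<psi> 0))) = 0 \<and> snd (snd (snd (\<psi> 0))) = 0
         \<longrightarrow> (\<forall>s t. sF_dist F (g s) (g t) = \<bar>s - t\<bar>))"
proof (intro conjI allI impI)
  fix g u \<psi> and \<theta> :: "real \<Rightarrow> real"
  assume H: "normal_ext F g u \<psi> \<and> q3 (\<psi> 0) = 0 \<and> q4 (\<psi> 0) = 0 \<and> continuous_on UNIV \<theta> \<and>
        (\<forall>t. hvec (g t) (\<psi> t) = (rpol F (\<theta> t) * cos (\<theta> t), rpol F (\<theta> t) * sin (\<theta> t)))"
  then interpret straight_extremal F g u \<psi> using assms by unfold_locales blast+
  have "rpol F (\<theta> t) *\<^sub>R dir (\<theta> t) = h" for t using H hvec_const by (simp add: dir_def)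
  then show "\<exists>\<theta>0. \<forall>t. \<theta> t = \<theta>0" using angle_const_if_polar_point_const[OF assms] H by blast
next
  fix \<theta>0 r' assume "(rpol F has_real_derivative r') (at \<theta>0)"
  from ext_data_eq_if_exposed_face_singleton[OF assms exposed_face_eq_if_has_derivative[OF assms this]]
  show "ext_data F \<theta>0 = {\<lambda>t. ((r' * sin \<theta>0 + rpol F \<theta>0 * cos \<theta>0) / (rpol F \<theta>0)^2 * t,
      (rpol F \<theta>0 * sin \<theta>0 - r' * cos \<theta>0) / (rpol F \<theta>0)^2 * t, 0, 0)}"
    by (simp add: horizontal_line_def[abs_def] control_of_angle_def)
next
  fix g u \<psi> s t assume "normal_ext F g u \<psi> \<and> q3 (\<psi> 0) = 0 \<and> q4 (\<psi> 0) = 0"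
  then interpret straight_extremal F g u \<psi> using assms by unfold_locales blast+
  show "sF_dist F (g s) (g t) = \<bar>s - t\<bar>" by (rule sF_dist_eq)
qed (rule ext_data_eq_horizontal_line_iff_differentiable[OF assms])

end
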